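(* Let $R,B>0$, positive integers $k,T$, and $d=2d'$, and suppose $kT=\Omega((Rd/B)^2)$. For any given algorithm, consider the instance in $\mathbb{R}^d$ obtained as follows: in the first half of the rounds, use the noisy hypercube instance (Type A below) constructed on $d'$ of the coordinates, and in the second half of the rounds use the delayed-feedback instance (Type B below) constructed on the other $d'$ coordinates, with $\theta^*$ chosen accordingly on each block of coordinates. Then this instance achieves $$R(T)=\Omega\big(\min(Rd\sqrt{kT}+Bdk,\ BkT)\big).$$
   Context: Problem: in each round $t$ the learner observes feature vectors $x_t(i)\in\mathbb{R}^d$ ($i\in[N]$) and a family $S_t$ of $k$-subsets of $[N]$, chooses $I_t\in S_t$, and observes $r_t(i)={\theta^*}^\top x_t(i)+\eta_t(i)$ for $i\in I_t$. Regret $R(T)=\sum_{t}\big(\sum_{i\in I_t^*}{\theta^*}^\top x_t(i)-\sum_{i\in I_t}{\theta^*}^\top x_t(i)\big)$, $I_t^*\in\arg\max_{I\in S_t}\sum_{i\in I}{\theta^*}^\top x_t(i)$. Type A (in dimension $m$, over $T_A$ rounds): $N=k2^m$ arms; for each $s\in[k]$ the arms $(s-1)2^m+1,\dots,s2^m$ have feature vectors enumerating $\{-1,1\}^m$; $S_t$ consists of all $k$-subsets; noise i.i.d. $\mathcal{N}(0,R^2)$; $\theta^*\in\{-R/\sqrt{kT_A},R/\sqrt{kT_A}\}^m$ chosen adversarially for the algorithm. Type B (in dimension $m=2m'$, over $T_B$ rounds): $N=2k$ arms, $S_t$ all $k$-subsets of $[2k]$, zero noise; the rounds are divided into $\min(m',T_B)$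 groups and in group $j$, $x_t(i)=B\sqrt{m}e_{2j-1}$ for $i\le k$ and $x_t(i)=B\sqrt{m}e_{2j}$ for $i>k$ ($e_l$ standard basis); $\theta^*\in\{-1/\sqrt{m},1/\sqrt{m}\}^m$ chosen adversarially for the algorithm. *)

theory Defs
  imports "HOL-Probability.Probability"
begin

(* Conventions: rounds t = 0..T-1, arms i = 0..N-1, coordinates l = 0..d-1 (all 0-indexed).
   Parameters: d' = 2*m', d = 2*d' = 4*m', T_A = T div 2 (first half), T_B = T - T_A,
   N = k * 2^d'. Coordinates 0..d'-1 carry the Type A (hypercube) instance,
   coordinates d'..d-1 carry the Type B (delayed feedback) instance. *)

(* Type A: arm i enumerates {-1,1}^d' via the binary digits of (i mod 2^d') *)
definition hyper_feat :: "nat \<Rightarrow> nat \<Rightarrow> nat \<Rightarrow> real" where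
  "hyper_feat d' i l = (if l < d' then (if odd ((i mod 2 ^ d') div 2 ^ l) then 1 else -1) else 0)"

definition feat :: "real \<Rightarrow> nat \<Rightarrow> nat \<Rightarrow> nat \<Rightarrow> nat \<Rightarrow> nat \<Rightarrow> nat \<Rightarrow> real" where
  "feat B k T m' t i l =
    (let d' = 2 * m'; TA = T div 2; TB = T - TA; G = min m' TB in
     if t < TA then hyper_feat d' i l
     else let j = (t - TA) * G div TB in
       if i < k \<and> l = d' + 2 * j then B * sqrt (real d')
       else if k \<le> i \<and> i < 2 * k \<and> l = d' + 2 * j + 1 then B * sqrt (real d')
       else 0)"

definition choice_sets :: "nat \<Rightarrow> nat \<Rightarrow> nat \<Rightarrow> nat \<Rightarrow> nat set set" where
  "choice_sets k T m' t =
     {I. I \<subseteq> {..< (if t < T div 2 then k * 2 ^ (2 * m') else 2 * k)} \<and> card I = k}"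

definition mean_rew :: "(nat \<Rightarrow> real) \<Rightarrow> real \<Rightarrow> nat \<Rightarrow> nat \<Rightarrow> nat \<Rightarrow> nat \<Rightarrow> nat \<Rightarrow> real" where
  "mean_rew \<theta> B k T m' t i = (\<Sum>l<4 * m'. \<theta> l * feat B k T m' t i l)"

(* An algorithm: given its random seed u, the round t, its past choices (I_s)_{s<t} and the
   observed rewards r_s(i) (s<t, i in I_s; everything else masked to 0) it picks I_t. *)
type_synonym 'u algorithm = "'u \<Rightarrow> nat \<Rightarrow> (nat \<Rightarrow> nat set) \<Rightarrow> (nat \<Rightarrow> nat \<Rightarrow> real) \<Rightarrow> nat set"

primrec choices :: "'u algorithm \<Rightarrow> (nat \<Rightarrow> nat \<Rightarrow> real) \<Rightarrow> (nat \<Rightarrow> nat \<Rightarrow> real) \<Rightarrow> 'u \<Rightarrow> nat \<Rightarrow> nat set list" where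
  "choices alg mu eta u 0 = []"
| "choices alg mu eta u (Suc t) =
     (let h = choices alg mu eta u t in
      h @ [alg u t (\<lambda>s. if s < t then h ! s else {})
                   (\<lambda>s i. if s < t \<and> i \<in> h ! s then mu s i + eta s i else 0)])"

definition regret :: "(nat \<Rightarrow> nat set set) \<Rightarrow> (nat \<Rightarrow> nat \<Rightarrow> real) \<Rightarrow> nat \<Rightarrow> nat set list \<Rightarrow> real" where
  "regret S mu T Is = (\<Sum>t<T. Max ((\<lambda>I. \<Sum>i\<in>I. mu t i) ` S t) - (\<Sum>i\<in>Is ! t. mu t i))"

definition gauss :: "real \<Rightarrow> real measure" where
  "gauss R = density lborel (normal_density 0 R)"

definition noise_space :: "real \<Rightarrow> nat \<Rightarrow> nat \<Rightarrow> nat \<Rightarrow> (nat \<times> nat \<Rightarrow> real) measure" where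
  "noise_space R k T m' = PiM ({..< T div 2} \<times> {..< k * 2 ^ (2 * m')}) (\<lambda>_. gauss R)"

definition noise_of :: "nat \<Rightarrow> (nat \<times> nat \<Rightarrow> real) \<Rightarrow> nat \<Rightarrow> nat \<Rightarrow> real" where
  "noise_of T \<eta> s i = (if s < T div 2 then \<eta> (s, i) else 0)"

definition exp_regret :: "'u measure \<Rightarrow> 'u algorithm \<Rightarrow> real \<Rightarrow> real \<Rightarrow> nat \<Rightarrow> nat \<Rightarrow> nat \<Rightarrow> (nat \<Rightarrow> real) \<Rightarrow> ennreal" where
  "exp_regret U alg R B k T m' \<theta> =
     (\<integral>\<^sup>+ \<omega>. ennreal (regret (choice_sets k T m') (mean_rew \<theta> B k T m') T
              (choices alg (mean_rew \<theta> B k T m') (noise_of T (snd \<omega>)) (fst \<omega>) T))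
      \<partial>(U \<Otimes>\<^sub>M noise_space R k T m'))"

end

theory Submission
  imports Defs
begin

text \<open>Encode the sign pattern of \<open>\<theta>*\<close> as a set \<open>S \<subseteq> {..<4 m'}\<close> and average the regret over
  all \<open>2 ^ (4 m')\<close> patterns; some pattern is at least as bad as the average.

  First half (hypercube instance, coordinates \<open>< 2 m'\<close>, Gaussian noise): flipping the sign of one
  coordinate \<open>l\<close> shifts every mean reward by \<open>\<plusminus>2 thetaA\<close>. The likelihood ratio of the observed
  rewards under the two patterns has Hellinger affinity \<open>exp (- n k (2 thetaA)\<^sup>2 / (8 R\<^sup>2)) = exp (- 1 / 2)\<close>,
  so by Le Cam's two-point argument the expected numbers of arms played with the wrong sign in
  coordinate \<open>l\<close> add up to at least \<open>k n / (2 e)\<close> over the two patterns. Each such arm costs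
  \<open>2 thetaA\<close>, which gives \<open>m' R \<surd>(k n) / e\<close> on average.

  Second half (delayed feedback instance, no noise): at the first round of each group nothing
  observed so far depends on the group's two coordinates, so flipping both leaves the algorithm's
  choice unchanged while negating all mean rewards. When the two coordinates have opposite signs
  the two regrets add up to at least \<open>2 B k\<close>, which gives \<open>B k / 2\<close> per group on average.

  The sum of the two averages dominates \<open>min (R d \<surd>(k T) + B d k) (B k T) / 24\<close>.\<close>

section \<open>Histories of an algorithm\<close>

definition past_choices :: "nat set list \<Rightarrow> nat \<Rightarrow> nat \<Rightarrow> nat set" where
  "past_choices c t = (\<lambda>s. if s < t then c ! s else {})"

definition observed_rewards ::
  "(nat \<Rightarrow> nat \<Rightarrow> real) \<Rightarrow> (nat \<Rightarrow> nat \<Rightarrow> real) \<Rightarrow> nat set list \<Rightarrow> nat \<Rightarrow> nat \<Rightarrow> nat \<Rightarrow> real"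
where
  "observed_rewards mu e c t = (\<lambda>s i. if s < t \<and> i \<in> c ! s then mu s i + e s i else 0)"

lemma choices_Suc_eq:
  "choices alg mu e u (Suc t) = choices alg mu e u t @
     [alg u t (past_choices (choices alg mu e u t) t) (observed_rewards mu e (choices alg mu e u t) t)]"
  by (simp add: Let_def past_choices_def observed_rewards_def)

declare choices.simps(2) [simp del]

lemma length_choices [simp]: "length (choices alg mu e u t) = t"
  by (induction t) (simp_all add: choices_Suc_eq)

lemma nth_choices_Suc: "s < t \<Longrightarrow> choices alg mu e u (Suc t) ! s = choices alg mu e u t ! s"
  by (simp add: choices_Suc_eq nth_append)

lemma nth_choices_last:
  "choices alg mu e u (Suc t) ! t =
     alg u t (past_choices (choices alg mu e u t) t) (observed_rewards mu e (choices alg mu e u t) t)"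
  by (simp add: choices_Suc_eq nth_append)

lemma nth_choices_le:
  assumes "s < t" "t \<le> t'"
  shows "choices alg mu e u t' ! s = choices alg mu e u t ! s"
  using assms(2)
proof (induction t' rule: dec_induct)
  case (step t')
  then show ?case using assms(1) by (simp add: nth_choices_Suc)
qed simp

lemma nth_choices:
  "s < t \<Longrightarrow> choices alg mu e u t ! s =
     alg u s (past_choices (choices alg mu e u s) s) (observed_rewards mu e (choices alg mu e u s) s)"
  using nth_choices_le[of s "Suc s" t alg mu e u] nth_choices_last[of alg mu e u s] by simp

lemma observed_rewards_cong:
  assumes "\<forall>s<t. \<forall>i. mu s i + e s i = mu' s i + e' s i"
  shows "observed_rewards mu e c t = observed_rewards mu' e' c t"
  using assms by (auto simp: observed_rewards_def fun_eq_iff)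

lemma choices_cong_rewards:
  assumes "\<forall>s<t. \<forall>i. mu s i + e s i = mu' s i + e' s i"
  shows "choices alg mu e u t = choices alg mu' e' u t"
  using assms
proof (induction t)
  case (Suc t)
  then have IH: "choices alg mu e u t = choices alg mu' e' u t" by simp
  have "observed_rewards mu e (choices alg mu e u t) t = observed_rewards mu' e' (choices alg mu e u t) t"
    using Suc.prems by (intro observed_rewards_cong) simp
  then show ?case by (simp add: choices_Suc_eq IH)
qed simp

section \<open>Measurability of histories\<close>

abbreviation reward_space :: "(nat \<Rightarrow> nat \<Rightarrow> real) measure" where
  "reward_space \<equiv> PiM UNIV (\<lambda>_::nat. PiM UNIV (\<lambda>_::nat. borel :: real measure))"

definition finite_set_lists :: "nat set list set" where
  "finite_set_lists = lists (Collect finite)"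

lemma countable_finite_set_lists: "countable finite_set_lists"
  unfolding finite_set_lists_def by (intro countable_lists countable_Collect_finite)

abbreviation history_space :: "(nat set list \<times> (nat \<Rightarrow> nat \<Rightarrow> real)) measure" where
  "history_space \<equiv> count_space finite_set_lists \<Otimes>\<^sub>M reward_space"

lemma measurable_count_space_restrict:
  assumes "f \<in> M \<rightarrow>\<^sub>M count_space UNIV" "f \<in> space M \<rightarrow> X" "countable X"
  shows "f \<in> M \<rightarrow>\<^sub>M count_space X"
proof -
  have "\<forall>a\<in>X. f -` {a} \<inter> space M \<in> sets M"
    using measurable_sets[OF assms(1), of "{_}"] by auto
  then show ?thesis using assms(2,3) by (subst measurable_count_space_eq_countable) auto
qed

lemma measurable_reward_entry: "(\<lambda>r. r s i) \<in> reward_space \<rightarrow>\<^sub>M (borel :: real measure)"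
proof -
  have "(\<lambda>r. r s) \<in> reward_space \<rightarrow>\<^sub>M PiM UNIV (\<lambda>_::nat. borel :: real measure)"
    by (rule measurable_component_singleton) simp
  moreover have "(\<lambda>x. x i) \<in> PiM UNIV (\<lambda>_::nat. borel :: real measure) \<rightarrow>\<^sub>M borel"
    by (rule measurable_component_singleton) simp
  ultimately show ?thesis by (rule measurable_compose)
qed

lemma measurable_observed_rewards:
  assumes E: "\<And>s i. (\<lambda>\<omega>. E \<omega> s i) \<in> borel_measurable M"
  shows "(\<lambda>\<omega>. observed_rewards mu (E \<omega>) c t) \<in> M \<rightarrow>\<^sub>M reward_space"
proof -
  have "(\<lambda>\<omega>. if s < t \<and> i \<in> c ! s then mu s i + E \<omega> s i else 0) \<in> borel_measurable M" for s i
    using E[of s i] by (cases "s < t \<and> i \<in> c ! s") simp_all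
  then have "(\<lambda>\<omega> i. if s < t \<and> i \<in> c ! s then mu s i + E \<omega> s i else 0) \<in> M \<rightarrow>\<^sub>M PiM UNIV (\<lambda>_. borel)"
    for s
    by (intro measurable_PiM_single') (auto simp: space_PiM)
  then show ?thesis unfolding observed_rewards_def
    by (intro measurable_PiM_single') (auto simp: space_PiM)
qed

lemma measurable_choices:
  assumes alg: "\<forall>t H. (\<lambda>(u, r). alg u t H r) \<in> U \<Otimes>\<^sub>M reward_space \<rightarrow>\<^sub>M count_space UNIV"
    and fin: "\<forall>u\<in>space U. \<forall>t H r. finite (alg u t H r)"
    and seed: "useed \<in> M \<rightarrow>\<^sub>M U"
    and E: "\<And>s i. (\<lambda>\<omega>. E \<omega> s i) \<in> borel_measurable M"
  shows "(\<lambda>\<omega>. choices alg mu (E \<omega>) (useed \<omega>) t) \<in> M \<rightarrow>\<^sub>M count_space finite_set_lists"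
proof (induction t)
  case 0
  then show ?case by (simp add: finite_set_lists_def)
next
  case (Suc t)
  let ?next = "\<lambda>c \<omega>. alg (useed \<omega>) t (past_choices c t) (observed_rewards mu (E \<omega>) c t)"
  have "(\<lambda>\<omega>. c @ [?next c \<omega>]) \<in> M \<rightarrow>\<^sub>M count_space finite_set_lists"
    if c: "c \<in> finite_set_lists" for c
  proof (rule measurable_count_space_restrict)
    have "(\<lambda>\<omega>. (useed \<omega>, observed_rewards mu (E \<omega>) c t)) \<in> M \<rightarrow>\<^sub>M U \<Otimes>\<^sub>M reward_space"
      by (intro measurable_Pair seed measurable_observed_rewards E)
    from measurable_compose[OF this alg[rule_format, of t "past_choices c t"]]
    have "(\<lambda>\<omega>. ?next c \<omega>) \<in> M \<rightarrow>\<^sub>M count_space UNIV" by simp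
    then show "(\<lambda>\<omega>. c @ [?next c \<omega>]) \<in> M \<rightarrow>\<^sub>M count_space UNIV"
      using measurable_compose[of _ M "count_space UNIV" "\<lambda>B. c @ [B]"] by simp
    show "(\<lambda>\<omega>. c @ [?next c \<omega>]) \<in> space M \<rightarrow> finite_set_lists"
      using c fin measurable_space[OF seed] by (auto simp: finite_set_lists_def)
  qed (rule countable_finite_set_lists)
  then show ?case unfolding choices_Suc_eq
    by (rule measurable_compose_countable'[OF _ Suc countable_finite_set_lists])
qed

definition history ::
  "'u algorithm \<Rightarrow> 'u \<Rightarrow> (nat \<Rightarrow> nat \<Rightarrow> real) \<Rightarrow> (nat \<Rightarrow> nat \<Rightarrow> real) \<Rightarrow> nat \<Rightarrow>
     nat set list \<times> (nat \<Rightarrow> nat \<Rightarrow> real)"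
where
  "history alg u mu e t = (choices alg mu e u t, observed_rewards mu e (choices alg mu e u t) t)"

lemma measurable_history:
  assumes alg: "\<forall>t H. (\<lambda>(u, r). alg u t H r) \<in> U \<Otimes>\<^sub>M reward_space \<rightarrow>\<^sub>M count_space UNIV"
    and fin: "\<forall>u\<in>space U. \<forall>t H r. finite (alg u t H r)"
    and seed: "useed \<in> M \<rightarrow>\<^sub>M U"
    and E: "\<And>s i. (\<lambda>\<omega>. E \<omega> s i) \<in> borel_measurable M"
  shows "(\<lambda>\<omega>. history alg (useed \<omega>) mu (E \<omega>) t) \<in> M \<rightarrow>\<^sub>M history_space"
  unfolding history_def
proof (rule measurable_Pair)
  show choices: "(\<lambda>\<omega>. choices alg mu (E \<omega>) (useed \<omega>) t) \<in> M \<rightarrow>\<^sub>M count_space finite_set_lists"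
    by (rule measurable_choices[OF alg fin seed E])
  show "(\<lambda>\<omega>. observed_rewards mu (E \<omega>) (choices alg mu (E \<omega>) (useed \<omega>) t) t) \<in> M \<rightarrow>\<^sub>M reward_space"
    by (rule measurable_compose_countable'[OF measurable_observed_rewards[OF E] choices
          countable_finite_set_lists])
qed

section \<open>Shifted Gaussians\<close>

text \<open>The density of \<open>\<N>(d, R\<^sup>2)\<close> with respect to \<open>\<N>(0, R\<^sup>2)\<close> at \<open>y\<close>.\<close>

definition gauss_lr :: "real \<Rightarrow> real \<Rightarrow> real \<Rightarrow> real" where
  "gauss_lr R d y = exp ((2 * y * d - d\<^sup>2) / (2 * R\<^sup>2))"

lemma gauss_lr_pos: "gauss_lr R d y > 0"
  by (simp add: gauss_lr_def)

lemma gauss_lr_zero [simp]: "gauss_lr R 0 y = 1"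
  by (simp add: gauss_lr_def)

lemma measurable_gauss_lr [measurable]: "gauss_lr R d \<in> borel_measurable borel"
  unfolding gauss_lr_def by measurable

lemma prob_space_gauss: "R > 0 \<Longrightarrow> prob_space (gauss R)"
  unfolding gauss_def by (rule prob_space_normal_density)

lemma product_sigma_finite_gauss: "R > 0 \<Longrightarrow> product_sigma_finite (\<lambda>_. gauss R)"
  unfolding product_sigma_finite_def using prob_space_gauss prob_space_imp_sigma_finite by blast

lemma space_gauss [simp]: "space (gauss R) = UNIV"
  by (simp add: gauss_def)

lemma sets_gauss [simp]: "sets (gauss R) = sets borel"
  by (simp add: gauss_def)

lemma measurable_from_gauss [simp]: "measurable (gauss R) M = measurable borel M"
  by (simp add: gauss_def cong: measurable_cong_sets)

lemma measurable_to_gauss [simp]: "measurable M (gauss R) = measurable M borel"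
  by (simp add: gauss_def cong: measurable_cong_sets)

lemma measurable_component_gauss: "(\<lambda>x. x c :: real) \<in> borel_measurable (PiM I (\<lambda>_. gauss R))"
proof (cases "c \<in> I")
  case True
  then show ?thesis using measurable_component_singleton[of c I "\<lambda>_. gauss R"] by simp
next
  case False
  then have "(\<lambda>x. x c) \<in> borel_measurable (PiM I (\<lambda>_. gauss R)) \<longleftrightarrow>
      (\<lambda>_. undefined :: real) \<in> borel_measurable (PiM I (\<lambda>_. gauss R))"
    by (intro measurable_cong) (auto simp: space_PiM PiE_def extensional_def)
  then show ?thesis by simp
qed

lemma measurable_noise_of: "(\<lambda>\<eta>. noise_of T \<eta> s i) \<in> borel_measurable (PiM I (\<lambda>_. gauss R))"
  unfolding noise_of_def by (cases "s < T div 2") (simp_all add: measurable_component_gauss)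

lemma normal_density_shift:
  assumes "R > 0"
  shows "normal_density 0 R (x - d) = normal_density 0 R x * gauss_lr R d x"
proof -
  have "exp (- (x - d)\<^sup>2 / (2 * R\<^sup>2)) = exp (- x\<^sup>2 / (2 * R\<^sup>2)) * exp ((2 * x * d - d\<^sup>2) / (2 * R\<^sup>2))"
    unfolding exp_add[symmetric] using assms by (simp add: field_simps power2_eq_square)
  then show ?thesis unfolding normal_density_def gauss_lr_def by simp
qed

lemma nn_integral_gauss_shift:
  assumes R: "R > 0" and g [measurable]: "g \<in> borel_measurable borel"
  shows "(\<integral>\<^sup>+y. g (y + d) \<partial>gauss R) = (\<integral>\<^sup>+y. g y * ennreal (gauss_lr R d y) \<partial>gauss R)"
proof -
  have "(\<integral>\<^sup>+y. g (y + d) \<partial>gauss R) = (\<integral>\<^sup>+y. ennreal (normal_density 0 R y) * g (y + d) \<partial>lborel)"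
    unfolding gauss_def by (subst nn_integral_density) auto
  also have "\<dots> = (\<integral>\<^sup>+y. ennreal (normal_density 0 R (y - d)) * g y \<partial>lborel)"
    using nn_integral_real_affine[of "\<lambda>y. ennreal (normal_density 0 R (y - d)) * g y" 1 d]
    by (simp add: add.commute)
  also have "\<dots> = (\<integral>\<^sup>+y. ennreal (normal_density 0 R y) * (g y * ennreal (gauss_lr R d y)) \<partial>lborel)"
    by (intro nn_integral_cong) (simp add: normal_density_shift[OF R] ennreal_mult' mult_ac gauss_lr_def)
  also have "\<dots> = (\<integral>\<^sup>+y. g y * ennreal (gauss_lr R d y) \<partial>gauss R)"
    unfolding gauss_def by (subst nn_integral_density) auto
  finally show ?thesis .
qed

lemma nn_integral_gauss_lr: "R > 0 \<Longrightarrow> (\<integral>\<^sup>+y. ennreal (gauss_lr R d y) \<partial>gauss R) = 1"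
  using nn_integral_gauss_shift[of R "\<lambda>_. 1" d] prob_space.emeasure_space_1[OF prob_space_gauss]
  by simp

lemma sqrt_exp: "sqrt (exp a) = exp (a / 2)"
  by (rule real_sqrt_unique) (simp_all add: power2_eq_square exp_add[symmetric])

lemma sqrt_prod: "sqrt (prod f A) = (\<Prod>i\<in>A. sqrt (f i))"
  by (induction A rule: infinite_finite_induct) (simp_all add: real_sqrt_mult)

lemma sqrt_gauss_lr: "R > 0 \<Longrightarrow> sqrt (gauss_lr R d y) = exp (- d\<^sup>2 / (8 * R\<^sup>2)) * gauss_lr R (d / 2) y"
  unfolding gauss_lr_def sqrt_exp exp_add[symmetric] by (simp add: field_simps power2_eq_square)

lemma nn_integral_sqrt_gauss_lr:
  assumes R: "R > 0"
  shows "(\<integral>\<^sup>+y. ennreal (sqrt (gauss_lr R d y)) \<partial>gauss R) = ennreal (exp (- d\<^sup>2 / (8 * R\<^sup>2)))"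
proof -
  have "(\<integral>\<^sup>+y. ennreal (sqrt (gauss_lr R d y)) \<partial>gauss R) =
      (\<integral>\<^sup>+y. ennreal (exp (- d\<^sup>2 / (8 * R\<^sup>2))) * ennreal (gauss_lr R (d / 2) y) \<partial>gauss R)"
    by (intro nn_integral_cong) (simp add: sqrt_gauss_lr[OF R] ennreal_mult' gauss_lr_pos less_imp_le)
  also have "\<dots> = ennreal (exp (- d\<^sup>2 / (8 * R\<^sup>2)))"
    by (simp add: nn_integral_cmult nn_integral_gauss_lr[OF R])
  finally show ?thesis .
qed

lemma measurable_nn_integral_fun_upd:
  assumes "sigma_finite_measure (M c)"
    and f: "f \<in> borel_measurable (PiM (insert c K) M)" and g: "g \<in> borel_measurable (M c)"
  shows "(\<lambda>z. \<integral>\<^sup>+y. f (z(c := y)) * g y \<partial>M c) \<in> borel_measurable (PiM K M)"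
proof -
  have "(\<lambda>p. f ((\<lambda>(z, y). z(c := y)) p) * g (snd p)) \<in> borel_measurable (PiM K M \<Otimes>\<^sub>M M c)"
    using measurable_compose[OF measurable_add_dim f] measurable_compose[OF measurable_snd g]
    by (rule borel_measurable_times_ennreal)
  from sigma_finite_measure.borel_measurable_nn_integral_fst[OF assms(1) this]
  show ?thesis by (simp add: case_prod_beta')
qed

lemma nn_integral_PiM_gauss_shift:
  assumes R: "R > 0" and "finite K" and "f \<in> borel_measurable (PiM K (\<lambda>_. gauss R))"
  shows "(\<integral>\<^sup>+y. f (\<lambda>c\<in>K. y c + v c) \<partial>PiM K (\<lambda>_. gauss R)) =
    (\<integral>\<^sup>+y. f y * (\<Prod>c\<in>K. ennreal (gauss_lr R (v c) (y c))) \<partial>PiM K (\<lambda>_. gauss R))"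
  using assms(2,3)
proof (induction K arbitrary: f rule: finite_induct)
  case empty
  then show ?case by (simp add: PiM_empty nn_integral_count_space_finite)
next
  case (insert c K)
  interpret product_sigma_finite "\<lambda>_. gauss R" by (rule product_sigma_finite_gauss[OF R])
  interpret gauss: prob_space "gauss R" by (rule prob_space_gauss[OF R])
  note f [measurable] = insert.prems
  let ?P = "PiM K (\<lambda>_. gauss R)" and ?PI = "PiM (insert c K) (\<lambda>_. gauss R)"
  let ?lr = "\<lambda>c y. ennreal (gauss_lr R (v c) y)"
  define H where "H z = (\<integral>\<^sup>+y. f (z(c := y)) * ?lr c y \<partial>gauss R)" for z
  have H [measurable]: "H \<in> borel_measurable ?P"
    unfolding H_def by (rule measurable_nn_integral_fun_upd[OF gauss.sigma_finite_measure f]) simp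
  have shift: "(\<lambda>z. \<lambda>c'\<in>I. z c' + v c') \<in> PiM I (\<lambda>_. gauss R) \<rightarrow>\<^sub>M PiM I (\<lambda>_. gauss R)" for I
    by (intro measurable_restrict) (simp add: borel_measurable_add measurable_component_gauss)
  have "(\<integral>\<^sup>+y. f (\<lambda>c'\<in>insert c K. y c' + v c') \<partial>?PI)
      = (\<integral>\<^sup>+x. (\<integral>\<^sup>+y. f (\<lambda>c'\<in>insert c K. (x(c := y)) c' + v c') \<partial>gauss R) \<partial>?P)"
    by (rule product_nn_integral_insert[OF insert(1,2)]) (rule measurable_compose[OF shift f])
  also have "\<dots> = (\<integral>\<^sup>+x. H (\<lambda>c'\<in>K. x c' + v c') \<partial>?P)"
  proof (rule nn_integral_cong)
    fix x assume x: "x \<in> space ?P"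
    let ?z = "\<lambda>c'\<in>K. x c' + v c'"
    have "?z \<in> space ?P" by (simp add: space_PiM)
    from measurable_compose[OF measurable_component_update[OF this insert(2)] f]
    have "(\<lambda>y. f (?z(c := y))) \<in> borel_measurable borel" by (simp only: measurable_from_gauss)
    moreover have "(\<lambda>c'\<in>insert c K. (x(c := y)) c' + v c') = ?z(c := y + v c)" for y
      using insert(2) by (auto simp: fun_eq_iff restrict_def)
    ultimately show "(\<integral>\<^sup>+y. f (\<lambda>c'\<in>insert c K. (x(c := y)) c' + v c') \<partial>gauss R) = H ?z"
      unfolding H_def using nn_integral_gauss_shift[OF R, of "\<lambda>y. f (?z(c := y))" "v c"] by simp
  qed
  also have "\<dots> = (\<integral>\<^sup>+x. H x * (\<Prod>c'\<in>K. ?lr c' (x c')) \<partial>?P)"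
    by (rule insert.IH[OF H])
  also have "\<dots> = (\<integral>\<^sup>+x. (\<integral>\<^sup>+y. f (x(c := y)) * (\<Prod>c'\<in>insert c K. ?lr c' ((x(c := y)) c')) \<partial>gauss R) \<partial>?P)"
  proof (rule nn_integral_cong)
    fix x assume x: "x \<in> space ?P"
    have "(\<Prod>c'\<in>K. ?lr c' ((x(c := y)) c')) = (\<Prod>c'\<in>K. ?lr c' (x c'))" for y
      using insert(2) by (intro prod.cong) auto
    then have prod: "(\<Prod>c'\<in>insert c K. ?lr c' ((x(c := y)) c')) = ?lr c y * (\<Prod>c'\<in>K. ?lr c' (x c'))"
      for y using insert(1,2) by simp
    have "(\<lambda>y. f (x(c := y)) * ?lr c y) \<in> borel_measurable (gauss R)"
      using measurable_compose[OF measurable_component_update[OF x insert(2)] f]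
      by (intro borel_measurable_times_ennreal) (simp_all add: fun_upd_def)
    then show "H x * (\<Prod>c'\<in>K. ?lr c' (x c')) =
        (\<integral>\<^sup>+y. f (x(c := y)) * (\<Prod>c'\<in>insert c K. ?lr c' ((x(c := y)) c')) \<partial>gauss R)"
      unfolding prod H_def by (subst nn_integral_multc[symmetric]) (simp_all add: mult_ac)
  qed
  also have "\<dots> = (\<integral>\<^sup>+y. f y * (\<Prod>c'\<in>insert c K. ?lr c' (y c')) \<partial>?PI)"
    by (rule product_nn_integral_insert[OF insert(1,2), symmetric])
      (measurable, rule measurable_component_gauss)
  finally show ?case .
qed

section \<open>Change of measure along the history\<close>

lemma le_cam_pointwise:
  fixes w L b :: real
  assumes w: "0 \<le> w" "w \<le> 1" and L: "0 < L" and b: "0 \<le> b"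
  shows "2 * b * sqrt L \<le> (w + (1 - w) * L) + (b\<^sup>2 + b\<^sup>2 * L)"
proof -
  define s where "s = sqrt L"
  have s: "0 \<le> s" "s\<^sup>2 = L" using L by (auto simp: s_def)
  show ?thesis
  proof (cases "L \<le> 1")
    case True
    have "L \<le> w + (1 - w) * L"
      using w True mult_left_mono[of L 1 w] by (simp add: algebra_simps)
    moreover have "2 * b * s \<le> s\<^sup>2 + (b\<^sup>2 + b\<^sup>2 * s\<^sup>2)"
      using sum_squares_ge_zero[of "s - b" "b * s"] by (simp add: power2_eq_square algebra_simps)
    ultimately show ?thesis using s unfolding s_def by simp
  next
    case False
    have "1 \<le> w + (1 - w) * L"
      using w False mult_left_mono[of 1 L "1 - w"] by (simp add: algebra_simps)
    moreover have "2 * b * s \<le> 1 + (b\<^sup>2 + b\<^sup>2 * s\<^sup>2)"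
      using sum_squares_ge_zero[of "1 - b * s" b] by (simp add: power2_eq_square algebra_simps)
    ultimately show ?thesis using s unfolding s_def by simp
  qed
qed

lemma le_cam_pointwise_ennreal:
  fixes w L b :: real
  assumes w: "0 \<le> w" "w \<le> 1" and L: "0 < L" and b: "0 \<le> b"
  shows "ennreal (2 * b) * ennreal (sqrt L) \<le>
    (ennreal w + ennreal (1 - w) * ennreal L) + (ennreal (b\<^sup>2) + ennreal (b\<^sup>2) * ennreal L)"
proof -
  have "ennreal (2 * b * sqrt L) \<le> ennreal ((w + (1 - w) * L) + (b\<^sup>2 + b\<^sup>2 * L))"
    by (rule ennreal_leI[OF le_cam_pointwise[OF w L b]])
  then show ?thesis
    using w L b by (simp add: ennreal_mult[symmetric] ennreal_plus[symmetric] del: ennreal_plus)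
qed

locale gaussian_rounds =
  fixes U :: "'u measure" and alg :: "'u algorithm" and u :: 'u and R :: real and n N k T :: nat
  assumes R: "R > 0" and n_eq: "n = T div 2"
    and measurable_alg: "\<forall>t H. (\<lambda>(u, r). alg u t H r) \<in> U \<Otimes>\<^sub>M reward_space \<rightarrow>\<^sub>M count_space UNIV"
    and finite_alg: "\<forall>u\<in>space U. \<forall>t H r. finite (alg u t H r)"
    and seed: "u \<in> space U"
    and alg_range: "\<And>t H r. t < n \<Longrightarrow> alg u t H r \<subseteq> {..<N} \<and> card (alg u t H r) = k"
begin

abbreviation noise_law :: "nat \<times> nat \<Rightarrow> real measure" where
  "noise_law \<equiv> \<lambda>_. gauss R"

definition grid :: "(nat \<times> nat) set" where
  "grid = {..<n} \<times> {..<N}"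

abbreviation P :: "(nat \<times> nat \<Rightarrow> real) measure" where
  "P \<equiv> PiM grid noise_law"

definition row :: "nat \<Rightarrow> (nat \<times> nat) set" where
  "row m = {m} \<times> {..<N}"

lemma product_sigma_finite_noise: "product_sigma_finite noise_law"
  by (rule product_sigma_finite_gauss[OF R])

lemma prob_space_noise: "prob_space (PiM I noise_law)"
  by (intro prob_space_PiM prob_space_gauss[OF R])

abbreviation hist :: "(nat \<Rightarrow> nat \<Rightarrow> real) \<Rightarrow> nat \<Rightarrow> (nat \<times> nat \<Rightarrow> real) \<Rightarrow>
    nat set list \<times> (nat \<Rightarrow> nat \<Rightarrow> real)" where
  "hist mu m \<eta> \<equiv> history alg u mu (noise_of T \<eta>) m"

abbreviation chosen :: "(nat \<Rightarrow> nat \<Rightarrow> real) \<Rightarrow> nat \<Rightarrow> (nat \<times> nat \<Rightarrow> real) \<Rightarrow> nat set list" where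
  "chosen mu m \<eta> \<equiv> choices alg mu (noise_of T \<eta>) u m"

lemma measurable_hist: "(\<lambda>\<eta>. hist mu m \<eta>) \<in> PiM I noise_law \<rightarrow>\<^sub>M history_space"
  by (rule measurable_history[OF measurable_alg finite_alg measurable_const[OF seed] measurable_noise_of])

lemma measurable_chosen: "(\<lambda>\<eta>. chosen mu m \<eta>) \<in> PiM I noise_law \<rightarrow>\<^sub>M count_space finite_set_lists"
  by (rule measurable_choices[OF measurable_alg finite_alg measurable_const[OF seed] measurable_noise_of])

lemma measurable_fun_chosen: "(\<lambda>\<eta>. f (chosen mu m \<eta>) :: ennreal) \<in> borel_measurable (PiM I noise_law)"
  using measurable_compose[OF measurable_chosen, of f borel] by simp

lemma hist_in_space: "\<eta> \<in> space (PiM I noise_law) \<Longrightarrow> hist mu m \<eta> \<in> space history_space"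
  by (rule measurable_space[OF measurable_hist])

definition next_choice :: "nat set list \<times> (nat \<Rightarrow> nat \<Rightarrow> real) \<Rightarrow> nat \<Rightarrow> nat set" where
  "next_choice h m = alg u m (past_choices (fst h) m) (snd h)"

lemma next_choice_subset: "m < n \<Longrightarrow> next_choice h m \<subseteq> {..<N}"
  using alg_range by (simp add: next_choice_def)

lemma measurable_next_choice:
  "(\<lambda>h. next_choice h m) \<in> history_space \<rightarrow>\<^sub>M count_space (Collect finite)"
proof -
  have "(\<lambda>r. alg u m H r) \<in> reward_space \<rightarrow>\<^sub>M count_space UNIV" for H
    using measurable_Pair2[OF measurable_alg[rule_format, of m H] seed] by simp
  then have "(\<lambda>h. alg u m (past_choices c m) (snd h)) \<in> history_space \<rightarrow>\<^sub>M count_space (Collect finite)"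
    for c
    by (intro measurable_count_space_restrict[OF measurable_compose[OF measurable_snd]])
      (use finite_alg seed in \<open>auto intro: countable_Collect_finite\<close>)
  from measurable_compose_countable'[OF this measurable_fst countable_finite_set_lists]
  show ?thesis unfolding next_choice_def .
qed

definition extend_history ::
  "(nat \<Rightarrow> nat \<Rightarrow> real) \<Rightarrow> nat \<Rightarrow> nat set list \<times> (nat \<Rightarrow> nat \<Rightarrow> real) \<Rightarrow> (nat \<times> nat \<Rightarrow> real) \<Rightarrow>
     nat set list \<times> (nat \<Rightarrow> nat \<Rightarrow> real)"
where
  "extend_history mu m h y =
     (fst h @ [next_choice h m],
      \<lambda>s i. if s = m then (if i \<in> next_choice h m then mu m i + y (m, i) else 0) else snd h s i)"

lemma measurable_extend_history:
  "(\<lambda>p. extend_history mu m (fst p) (snd p)) \<in> history_space \<Otimes>\<^sub>M PiM I noise_law \<rightarrow>\<^sub>M history_space"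
proof -
  let ?M = "history_space \<Otimes>\<^sub>M PiM I noise_law"
  have next_choice: "(\<lambda>p. next_choice (fst p) m) \<in> ?M \<rightarrow>\<^sub>M count_space (Collect finite)"
    using measurable_compose[OF measurable_fst measurable_next_choice] .
  have "(\<lambda>p. c @ [next_choice (fst p) m]) \<in> ?M \<rightarrow>\<^sub>M count_space finite_set_lists"
    if "c \<in> finite_set_lists" for c
  proof -
    have "(\<lambda>A. c @ [A]) \<in> count_space (Collect finite) \<rightarrow>\<^sub>M count_space finite_set_lists"
      using that by (auto simp: finite_set_lists_def)
    from measurable_compose[OF next_choice this] show ?thesis .
  qed
  moreover have "(\<lambda>p. fst (fst p)) \<in> ?M \<rightarrow>\<^sub>M count_space finite_set_lists"
    using measurable_compose[OF measurable_fst measurable_fst] .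
  ultimately have choices:
    "(\<lambda>p. fst (fst p) @ [next_choice (fst p) m]) \<in> ?M \<rightarrow>\<^sub>M count_space finite_set_lists"
    by (rule measurable_compose_countable'[OF _ _ countable_finite_set_lists])
  have "(\<lambda>p. if s = m then (if i \<in> next_choice (fst p) m then mu m i + snd p (m, i) else 0)
      else snd (fst p) s i) \<in> borel_measurable ?M" for s i
  proof (cases "s = m")
    case True
    have "Measurable.pred ?M (\<lambda>p. i \<in> next_choice (fst p) m)"
      using measurable_compose[OF next_choice, of "\<lambda>A. i \<in> A"] by simp
    moreover have "(\<lambda>p. snd p (m, i)) \<in> borel_measurable ?M"
      using measurable_compose[OF measurable_snd measurable_component_gauss] .
    ultimately show ?thesis using True by (simp add: pred_def)
  next
    case False
    then show ?thesis
      using measurable_compose[OF measurable_compose[OF measurable_fst measurable_snd]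
          measurable_reward_entry] by simp
  qed
  then have rewards: "(\<lambda>p. \<lambda>s i. if s = m then (if i \<in> next_choice (fst p) m then mu m i + snd p (m, i) else 0)
      else snd (fst p) s i) \<in> ?M \<rightarrow>\<^sub>M reward_space"
    by (intro measurable_PiM_single') (auto intro!: measurable_PiM_single' simp: space_PiM)
  show ?thesis unfolding extend_history_def by (rule measurable_Pair[OF choices rewards])
qed

lemma noise_of_less: "s < n \<Longrightarrow> noise_of T \<eta> s i = \<eta> (s, i)"
  using n_eq by (simp add: noise_of_def)

lemma hist_Suc: "m < n \<Longrightarrow> hist mu (Suc m) \<eta> = extend_history mu m (hist mu m \<eta>) \<eta>"
  unfolding history_def extend_history_def next_choice_def
  by (auto simp: choices_Suc_eq observed_rewards_def nth_append noise_of_less fun_eq_iff)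

lemma hist_local:
  assumes "m \<le> n" "\<forall>s<m. \<forall>i. \<eta> (s, i) = \<eta>' (s, i)"
  shows "hist mu m \<eta> = hist mu m \<eta>'"
proof -
  have "\<forall>s<m. \<forall>i. mu s i + noise_of T \<eta> s i = mu s i + noise_of T \<eta>' s i"
    using assms by (simp add: noise_of_less)
  from choices_cong_rewards[OF this] observed_rewards_cong[OF this] show ?thesis
    unfolding history_def by metis
qed

lemma chosen_local: "m \<le> n \<Longrightarrow> \<forall>s<m. \<forall>i. \<eta> (s, i) = \<eta>' (s, i) \<Longrightarrow> chosen mu m \<eta> = chosen mu m \<eta>'"
  using hist_local[of m \<eta> \<eta>' mu] by (simp add: history_def)

lemma extend_history_local:
  "\<forall>i. y (m, i) = y' (m, i) \<Longrightarrow> extend_history mu m h y = extend_history mu m h y'"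
  by (simp add: extend_history_def fun_eq_iff)

lemma merge_other_rows:
  assumes "x \<in> space (PiM (grid - row m) noise_law)" "s < m" "m < n"
  shows "merge (grid - row m) (row m) (x, y) (s, i) = x (s, i)"
proof (cases "i < N")
  case True
  then have "(s, i) \<in> grid - row m" using assms(2,3) by (auto simp: grid_def row_def)
  then show ?thesis by (simp add: merge_def)
next
  case False
  then have "(s, i) \<notin> grid - row m" "(s, i) \<notin> row m" by (auto simp: grid_def row_def)
  then show ?thesis using assms(1) by (simp add: merge_def space_PiM PiE_def extensional_def)
qed

lemma merge_row:
  assumes "y \<in> space (PiM (row m) noise_law)"
  shows "merge (grid - row m) (row m) (x, y) (m, i) = y (m, i)"
proof (cases "i < N")
  case True
  then have "(m, i) \<in> row m" by (auto simp: row_def)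
  then show ?thesis by (simp add: merge_def)
next
  case False
  then have "(m, i) \<notin> grid - row m" "(m, i) \<notin> row m" by (auto simp: grid_def row_def)
  then show ?thesis using assms by (simp add: merge_def space_PiM PiE_def extensional_def)
qed

lemma nn_integral_split_row:
  assumes m: "m < n"
    and F_local: "\<And>\<eta> \<eta>' y. \<forall>s<m. \<forall>i. \<eta> (s, i) = \<eta>' (s, i) \<Longrightarrow> F \<eta> y = F \<eta>' y"
    and F_row: "\<And>\<eta> y y'. \<forall>i. y (m, i) = y' (m, i) \<Longrightarrow> F \<eta> y = F \<eta> y'"
    and F: "(\<lambda>\<eta>. F \<eta> \<eta>) \<in> borel_measurable P"
    and F_int: "(\<lambda>\<eta>. \<integral>\<^sup>+y. F \<eta> y \<partial>PiM (row m) noise_law) \<in> borel_measurable P"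
  shows "(\<integral>\<^sup>+\<eta>. F \<eta> \<eta> \<partial>P) = (\<integral>\<^sup>+\<eta>. (\<integral>\<^sup>+y. F \<eta> y \<partial>PiM (row m) noise_law) \<partial>P)"
proof -
  interpret product_sigma_finite noise_law by (rule product_sigma_finite_noise)
  interpret J: prob_space "PiM (row m) noise_law" by (rule prob_space_noise)
  let ?I = "grid - row m" and ?J = "row m"
  have split: "?I \<union> ?J = grid" "?I \<inter> ?J = {}" "finite ?I" "finite ?J"
    using m by (auto simp: grid_def row_def)
  have "(\<integral>\<^sup>+\<eta>. F \<eta> \<eta> \<partial>P) =
      (\<integral>\<^sup>+x. (\<integral>\<^sup>+y. F (merge ?I ?J (x, y)) (merge ?I ?J (x, y)) \<partial>PiM ?J noise_law) \<partial>PiM ?I noise_law)"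
    using product_nn_integral_fold[OF split(2,3,4), of "\<lambda>\<eta>. F \<eta> \<eta>"] F split(1) by simp
  also have "\<dots> = (\<integral>\<^sup>+x. (\<integral>\<^sup>+y. F x y \<partial>PiM ?J noise_law) \<partial>PiM ?I noise_law)"
  proof (intro nn_integral_cong)
    fix x y assume x: "x \<in> space (PiM ?I noise_law)" and y: "y \<in> space (PiM ?J noise_law)"
    have "F (merge ?I ?J (x, y)) (merge ?I ?J (x, y)) = F x (merge ?I ?J (x, y))"
      by (rule F_local) (simp add: merge_other_rows[OF x _ m])
    also have "\<dots> = F x y" by (rule F_row) (simp add: merge_row[OF y])
    finally show "F (merge ?I ?J (x, y)) (merge ?I ?J (x, y)) = F x y" .
  qed
  also have "\<dots> = (\<integral>\<^sup>+x. (\<integral>\<^sup>+y'. (\<integral>\<^sup>+y. F (merge ?I ?J (x, y')) y \<partial>PiM ?J noise_law)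
      \<partial>PiM ?J noise_law) \<partial>PiM ?I noise_law)"
  proof (rule nn_integral_cong)
    fix x assume x: "x \<in> space (PiM ?I noise_law)"
    have "F (merge ?I ?J (x, y')) y = F x y" for y' y
      by (rule F_local) (simp add: merge_other_rows[OF x _ m])
    then show "(\<integral>\<^sup>+y. F x y \<partial>PiM ?J noise_law) =
        (\<integral>\<^sup>+y'. (\<integral>\<^sup>+y. F (merge ?I ?J (x, y')) y \<partial>PiM ?J noise_law) \<partial>PiM ?J noise_law)"
      using J.emeasure_space_1 by simp
  qed
  also have "\<dots> = (\<integral>\<^sup>+\<eta>. (\<integral>\<^sup>+y. F \<eta> y \<partial>PiM ?J noise_law) \<partial>P)"
    using product_nn_integral_fold[OF split(2,3,4), of "\<lambda>\<eta>. \<integral>\<^sup>+y. F \<eta> y \<partial>PiM ?J noise_law"]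
      F_int split(1) by simp
  finally show ?thesis .
qed

text \<open>Fubini over row \<open>m\<close> of the noise: neither the history after \<open>m\<close> rounds nor the weight \<open>g\<close>
  depends on that row.\<close>

lemma nn_integral_hist_fresh_row:
  assumes m: "m < n"
    and \<Phi>: "(\<lambda>p. \<Phi> (fst p) (snd p)) \<in> borel_measurable (history_space \<Otimes>\<^sub>M PiM (row m) noise_law)"
    and \<Phi>_row: "\<And>h y y'. \<forall>i. y (m, i) = y' (m, i) \<Longrightarrow> \<Phi> h y = \<Phi> h y'"
    and g: "g \<in> borel_measurable P"
    and g_local: "\<And>\<eta> \<eta>'. \<forall>s<m. \<forall>i. \<eta> (s, i) = \<eta>' (s, i) \<Longrightarrow> g \<eta> = g \<eta>'"
  shows "(\<integral>\<^sup>+\<eta>. \<Phi> (hist mu m \<eta>) \<eta> * g \<eta> \<partial>P) =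
    (\<integral>\<^sup>+\<eta>. (\<integral>\<^sup>+y. \<Phi> (hist mu m \<eta>) y \<partial>PiM (row m) noise_law) * g \<eta> \<partial>P)"
proof -
  interpret J: prob_space "PiM (row m) noise_law" by (rule prob_space_noise)
  have row_grid: "row m \<subseteq> grid" using m by (auto simp: row_def grid_def)
  have \<Phi>_section: "(\<lambda>y. \<Phi> h y) \<in> borel_measurable (PiM (row m) noise_law)" if "h \<in> space history_space" for h
    using measurable_Pair2[OF \<Phi> that] by simp
  have \<Phi>_int: "(\<lambda>h. \<integral>\<^sup>+y. \<Phi> h y \<partial>PiM (row m) noise_law) \<in> borel_measurable history_space"
    using J.borel_measurable_nn_integral_fst[OF \<Phi>] by simp
  have "(\<integral>\<^sup>+\<eta>. \<Phi> (hist mu m \<eta>) \<eta> * g \<eta> \<partial>P) =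
      (\<integral>\<^sup>+\<eta>. (\<integral>\<^sup>+y. \<Phi> (hist mu m \<eta>) y * g \<eta> \<partial>PiM (row m) noise_law) \<partial>P)"
  proof (rule nn_integral_split_row[OF m])
    show "\<Phi> (hist mu m \<eta>) y * g \<eta> = \<Phi> (hist mu m \<eta>') y * g \<eta>'"
      if "\<forall>s<m. \<forall>i. \<eta> (s, i) = \<eta>' (s, i)" for \<eta> \<eta>' y
      using hist_local[OF _ that, of mu] g_local[OF that] m by simp
    show "\<Phi> (hist mu m \<eta>) y * g \<eta> = \<Phi> (hist mu m \<eta>) y' * g \<eta>"
      if "\<forall>i. y (m, i) = y' (m, i)" for \<eta> y y'
      using \<Phi>_row[OF that] by simp
    have "(\<lambda>\<eta>. \<Phi> (hist mu m \<eta>) (restrict \<eta> (row m))) \<in> borel_measurable P"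
      using measurable_compose[OF measurable_Pair[OF measurable_hist measurable_restrict_subset[OF row_grid]] \<Phi>]
      by simp
    moreover have "\<Phi> (hist mu m \<eta>) (restrict \<eta> (row m)) = \<Phi> (hist mu m \<eta>) \<eta>" if "\<eta> \<in> space P" for \<eta>
      using that by (intro \<Phi>_row) (auto simp: row_def grid_def space_PiM PiE_def extensional_def)
    ultimately show "(\<lambda>\<eta>. \<Phi> (hist mu m \<eta>) \<eta> * g \<eta>) \<in> borel_measurable P"
      using g by (subst measurable_cong[where g="\<lambda>\<eta>. \<Phi> (hist mu m \<eta>) (restrict \<eta> (row m)) * g \<eta>"]) auto
    have "(\<lambda>\<eta>. (\<integral>\<^sup>+y. \<Phi> (hist mu m \<eta>) y \<partial>PiM (row m) noise_law) * g \<eta>) \<in> borel_measurable P"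
      using measurable_compose[OF measurable_hist \<Phi>_int] g by (rule borel_measurable_times_ennreal)
    then show "(\<lambda>\<eta>. \<integral>\<^sup>+y. \<Phi> (hist mu m \<eta>) y * g \<eta> \<partial>PiM (row m) noise_law) \<in> borel_measurable P"
      by (rule measurable_cong[THEN iffD1, rotated])
        (simp add: nn_integral_multc \<Phi>_section hist_in_space)
  qed
  also have "\<dots> = (\<integral>\<^sup>+\<eta>. (\<integral>\<^sup>+y. \<Phi> (hist mu m \<eta>) y \<partial>PiM (row m) noise_law) * g \<eta> \<partial>P)"
    by (intro nn_integral_cong) (simp add: nn_integral_multc \<Phi>_section hist_in_space)
  finally show ?thesis .
qed

text \<open>The density, with respect to the law of the history under mean rewards \<open>mu\<close>, of its law under
  \<open>mu'\<close>: every observed reward contributes the density of its shifted Gaussian noise.\<close>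

definition likelihood_ratio ::
  "(nat \<Rightarrow> nat \<Rightarrow> real) \<Rightarrow> (nat \<Rightarrow> nat \<Rightarrow> real) \<Rightarrow> nat \<Rightarrow> (nat \<times> nat \<Rightarrow> real) \<Rightarrow> real"
where
  "likelihood_ratio mu mu' m \<eta> =
     (\<Prod>s<m. \<Prod>i\<in>chosen mu m \<eta> ! s. gauss_lr R (mu' s i - mu s i) (\<eta> (s, i)))"

definition row_likelihood_ratio ::
  "(nat \<Rightarrow> nat \<Rightarrow> real) \<Rightarrow> (nat \<Rightarrow> nat \<Rightarrow> real) \<Rightarrow> nat \<Rightarrow> nat set list \<times> (nat \<Rightarrow> nat \<Rightarrow> real) \<Rightarrow>
     (nat \<times> nat \<Rightarrow> real) \<Rightarrow> real"
where
  "row_likelihood_ratio mu mu' m h y = (\<Prod>i\<in>next_choice h m. gauss_lr R (mu' m i - mu m i) (y (m, i)))"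

lemma likelihood_ratio_pos: "likelihood_ratio mu mu' m \<eta> > 0"
  unfolding likelihood_ratio_def by (intro prod_pos) (simp add: gauss_lr_pos)

lemma row_likelihood_ratio_pos: "row_likelihood_ratio mu mu' m h y > 0"
  unfolding row_likelihood_ratio_def by (intro prod_pos) (simp add: gauss_lr_pos)

lemma likelihood_ratio_Suc:
  "likelihood_ratio mu mu' (Suc m) \<eta> =
     likelihood_ratio mu mu' m \<eta> * row_likelihood_ratio mu mu' m (hist mu m \<eta>) \<eta>"
proof -
  have "(\<Prod>s<m. \<Prod>i\<in>chosen mu (Suc m) \<eta> ! s. gauss_lr R (mu' s i - mu s i) (\<eta> (s, i)))
      = (\<Prod>s<m. \<Prod>i\<in>chosen mu m \<eta> ! s. gauss_lr R (mu' s i - mu s i) (\<eta> (s, i)))"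
    by (intro prod.cong refl) (simp add: nth_choices_Suc)
  moreover have "next_choice (hist mu m \<eta>) m = chosen mu (Suc m) \<eta> ! m"
    by (simp add: next_choice_def history_def nth_choices_last)
  ultimately show ?thesis
    unfolding likelihood_ratio_def row_likelihood_ratio_def by simp
qed

lemma likelihood_ratio_local:
  "m \<le> n \<Longrightarrow> \<forall>s<m. \<forall>i. \<eta> (s, i) = \<eta>' (s, i) \<Longrightarrow> likelihood_ratio mu mu' m \<eta> = likelihood_ratio mu mu' m \<eta>'"
  unfolding likelihood_ratio_def using chosen_local[of m \<eta> \<eta>' mu] by (auto intro!: prod.cong)

lemma row_likelihood_ratio_local:
  "\<forall>i. y (m, i) = y' (m, i) \<Longrightarrow> row_likelihood_ratio mu mu' m h y = row_likelihood_ratio mu mu' m h y'"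
  by (simp add: row_likelihood_ratio_def)

lemma measurable_likelihood_ratio:
  "(\<lambda>\<eta>. likelihood_ratio mu mu' m \<eta>) \<in> borel_measurable (PiM I noise_law)"
proof -
  have "(\<lambda>\<eta>. gauss_lr R (mu' s i - mu s i) (\<eta> (s, i))) \<in> borel_measurable (PiM I noise_law)" for s i
    using measurable_compose[OF measurable_component_gauss measurable_gauss_lr] .
  then have "(\<lambda>\<eta>. \<Prod>s<m. \<Prod>i\<in>c ! s. gauss_lr R (mu' s i - mu s i) (\<eta> (s, i)))
      \<in> borel_measurable (PiM I noise_law)" for c
    by (intro borel_measurable_prod) auto
  from measurable_compose_countable'[OF this measurable_chosen countable_finite_set_lists]
  show ?thesis unfolding likelihood_ratio_def .
qed

lemma measurable_row_likelihood_ratio: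
  "(\<lambda>p. row_likelihood_ratio mu mu' m (fst p) (snd p))
     \<in> borel_measurable (history_space \<Otimes>\<^sub>M PiM I noise_law)"
proof -
  have "(\<lambda>p. gauss_lr R (mu' m i - mu m i) (snd p (m, i)))
      \<in> borel_measurable (history_space \<Otimes>\<^sub>M PiM I noise_law)" for i
    using measurable_compose[OF measurable_compose[OF measurable_snd measurable_component_gauss]
        measurable_gauss_lr] .
  then have "(\<lambda>p. \<Prod>i\<in>A. gauss_lr R (mu' m i - mu m i) (snd p (m, i)))
      \<in> borel_measurable (history_space \<Otimes>\<^sub>M PiM I noise_law)" for A
    by (intro borel_measurable_prod) auto
  from measurable_compose_countable'[OF this measurable_compose[OF measurable_fst measurable_next_choice]
      countable_Collect_finite]
  show ?thesis unfolding row_likelihood_ratio_def .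
qed

lemma prod_row:
  fixes f :: "nat \<Rightarrow> real \<Rightarrow> 'a :: comm_monoid_mult"
  assumes "A \<subseteq> {..<N}"
  shows "(\<Prod>c\<in>row m. if snd c \<in> A then f (snd c) (y c) else 1) = (\<Prod>i\<in>A. f i (y (m, i)))"
proof -
  have "row m = (\<lambda>i. (m, i)) ` {..<N}" by (auto simp: row_def)
  then have "(\<Prod>c\<in>row m. if snd c \<in> A then f (snd c) (y c) else 1) =
      (\<Prod>i<N. if i \<in> A then f i (y (m, i)) else 1)"
    by (simp add: prod.reindex inj_on_def cong: if_cong)
  also have "\<dots> = (\<Prod>i\<in>A. f i (y (m, i)))"
    using assms by (simp add: prod.If_cases Int_absorb1)
  finally show ?thesis .
qed

text \<open>Within round \<open>m\<close>, the mean rewards \<open>mu'\<close> are the mean rewards \<open>mu\<close> with the noise of the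
  chosen arms shifted.\<close>

lemma nn_integral_row_change_mean:
  assumes m: "m < n" and Gf: "Gf \<in> borel_measurable history_space" and h: "h \<in> space history_space"
  shows "(\<integral>\<^sup>+y. Gf (extend_history mu' m h y) \<partial>PiM (row m) noise_law) =
    (\<integral>\<^sup>+y. Gf (extend_history mu m h y) * ennreal (row_likelihood_ratio mu mu' m h y) \<partial>PiM (row m) noise_law)"
proof -
  let ?d = "\<lambda>c. if snd c \<in> next_choice h m then mu' m (snd c) - mu m (snd c) else 0"
  have shift: "extend_history mu' m h y = extend_history mu m h (\<lambda>c\<in>row m. y c + ?d c)" for y
    using next_choice_subset[OF m, of h] unfolding extend_history_def by (auto simp: fun_eq_iff row_def)
  have "(\<lambda>y. Gf (extend_history mu m h y)) \<in> borel_measurable (PiM (row m) noise_law)"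
    using measurable_Pair2[OF measurable_compose[OF measurable_extend_history Gf] h] by simp
  from nn_integral_PiM_gauss_shift[OF R _ this, of ?d]
  have "(\<integral>\<^sup>+y. Gf (extend_history mu' m h y) \<partial>PiM (row m) noise_law) =
    (\<integral>\<^sup>+y. Gf (extend_history mu m h y) * (\<Prod>c\<in>row m. ennreal (gauss_lr R (?d c) (y c))) \<partial>PiM (row m) noise_law)"
    unfolding shift by (simp add: row_def)
  also have "\<dots> = (\<integral>\<^sup>+y. Gf (extend_history mu m h y) * ennreal (row_likelihood_ratio mu mu' m h y) \<partial>PiM (row m) noise_law)"
  proof -
    have "(\<Prod>c\<in>row m. ennreal (gauss_lr R (?d c) (y c))) = ennreal (row_likelihood_ratio mu mu' m h y)"
      for y
    proof -
      have "(\<Prod>c\<in>row m. ennreal (gauss_lr R (?d c) (y c))) =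
          (\<Prod>c\<in>row m. if snd c \<in> next_choice h m
             then ennreal (gauss_lr R (mu' m (snd c) - mu m (snd c)) (y c)) else 1)"
        by (intro prod.cong) auto
      also have "\<dots> = (\<Prod>i\<in>next_choice h m. ennreal (gauss_lr R (mu' m i - mu m i) (y (m, i))))"
        by (rule prod_row[OF next_choice_subset[OF m]])
      also have "\<dots> = ennreal (row_likelihood_ratio mu mu' m h y)"
        unfolding row_likelihood_ratio_def by (simp add: prod_ennreal gauss_lr_pos less_imp_le)
      finally show ?thesis .
    qed
    then show ?thesis by simp
  qed
  finally show ?thesis .
qed

lemma nn_integral_hist_change_mean_Suc:
  assumes m: "m < n" and Gf [measurable]: "Gf \<in> borel_measurable history_space"
    and IH: "\<And>K. K \<in> borel_measurable history_space \<Longrightarrow>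
      (\<integral>\<^sup>+\<eta>. K (hist mu' m \<eta>) \<partial>P) = (\<integral>\<^sup>+\<eta>. K (hist mu m \<eta>) * ennreal (likelihood_ratio mu mu' m \<eta>) \<partial>P)"
  shows "(\<integral>\<^sup>+\<eta>. Gf (hist mu' (Suc m) \<eta>) \<partial>P) =
    (\<integral>\<^sup>+\<eta>. Gf (hist mu (Suc m) \<eta>) * ennreal (likelihood_ratio mu mu' (Suc m) \<eta>) \<partial>P)"
proof -
  interpret J: prob_space "PiM (row m) noise_law" by (rule prob_space_noise)
  let ?J = "PiM (row m) noise_law"
  let ?lr = "\<lambda>\<eta>. ennreal (likelihood_ratio mu mu' m \<eta>)"
  let ?rlr = "\<lambda>h y. ennreal (row_likelihood_ratio mu mu' m h y)"
  define K where "K h = (\<integral>\<^sup>+y. Gf (extend_history mu' m h y) \<partial>?J)" for h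
  have ext: "(\<lambda>p. Gf (extend_history mu m (fst p) (snd p))) \<in> borel_measurable (history_space \<Otimes>\<^sub>M ?J)" for mu
    using measurable_compose[OF measurable_extend_history Gf] .
  then have K: "K \<in> borel_measurable history_space"
    unfolding K_def using J.borel_measurable_nn_integral_fst[OF ext] by simp
  have ext_rlr: "(\<lambda>p. Gf (extend_history mu m (fst p) (snd p)) * ?rlr (fst p) (snd p))
      \<in> borel_measurable (history_space \<Otimes>\<^sub>M ?J)"
    using ext measurable_row_likelihood_ratio by (intro borel_measurable_times_ennreal) simp_all
  have lr: "?lr \<in> borel_measurable P"
    using measurable_likelihood_ratio by simp
  have "(\<integral>\<^sup>+\<eta>. Gf (hist mu' (Suc m) \<eta>) \<partial>P) = (\<integral>\<^sup>+\<eta>. Gf (extend_history mu' m (hist mu' m \<eta>) \<eta>) * 1 \<partial>P)"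
    by (simp add: hist_Suc[OF m])
  also have "\<dots> = (\<integral>\<^sup>+\<eta>. K (hist mu' m \<eta>) * 1 \<partial>P)"
    unfolding K_def
  proof (rule nn_integral_hist_fresh_row[OF m ext])
    show "Gf (extend_history mu' m h y) = Gf (extend_history mu' m h y')"
      if "\<forall>i. y (m, i) = y' (m, i)" for h y y'
      using extend_history_local[OF that] by simp
  qed simp_all
  also have "\<dots> = (\<integral>\<^sup>+\<eta>. K (hist mu m \<eta>) * ?lr \<eta> \<partial>P)"
    using IH[OF K] by simp
  also have "\<dots> = (\<integral>\<^sup>+\<eta>. (\<integral>\<^sup>+y. Gf (extend_history mu m (hist mu m \<eta>) y) * ?rlr (hist mu m \<eta>) y \<partial>?J) * ?lr \<eta> \<partial>P)"
  proof (rule nn_integral_cong)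
    fix \<eta> assume "\<eta> \<in> space P"
    from nn_integral_row_change_mean[OF m Gf hist_in_space[OF this]]
    show "K (hist mu m \<eta>) * ?lr \<eta> =
        (\<integral>\<^sup>+y. Gf (extend_history mu m (hist mu m \<eta>) y) * ?rlr (hist mu m \<eta>) y \<partial>?J) * ?lr \<eta>"
      unfolding K_def by simp
  qed
  also have "\<dots> = (\<integral>\<^sup>+\<eta>. Gf (extend_history mu m (hist mu m \<eta>) \<eta>) * ?rlr (hist mu m \<eta>) \<eta> * ?lr \<eta> \<partial>P)"
  proof (rule nn_integral_hist_fresh_row[OF m ext_rlr _ lr, symmetric])
    show "Gf (extend_history mu m h y) * ?rlr h y = Gf (extend_history mu m h y') * ?rlr h y'"
      if "\<forall>i. y (m, i) = y' (m, i)" for h y y'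
      using extend_history_local[OF that] row_likelihood_ratio_local[OF that] by simp
    show "?lr \<eta> = ?lr \<eta>'" if "\<forall>s<m. \<forall>i. \<eta> (s, i) = \<eta>' (s, i)" for \<eta> \<eta>'
      using likelihood_ratio_local[OF _ that] m by simp
  qed
  also have "\<dots> = (\<integral>\<^sup>+\<eta>. Gf (hist mu (Suc m) \<eta>) * ennreal (likelihood_ratio mu mu' (Suc m) \<eta>) \<partial>P)"
    by (simp add: hist_Suc[OF m] likelihood_ratio_Suc ennreal_mult' likelihood_ratio_pos
        row_likelihood_ratio_pos less_imp_le mult_ac)
  finally show ?thesis .
qed

lemma nn_integral_hist_change_mean:
  assumes "m \<le> n" and "Gf \<in> borel_measurable history_space"
  shows "(\<integral>\<^sup>+\<eta>. Gf (hist mu' m \<eta>) \<partial>P) = (\<integral>\<^sup>+\<eta>. Gf (hist mu m \<eta>) * ennreal (likelihood_ratio mu mu' m \<eta>) \<partial>P)"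
  using assms
proof (induction m arbitrary: Gf)
  case 0
  have "hist mu' 0 \<eta> = hist mu 0 \<eta>" for \<eta> by (simp add: history_def observed_rewards_def)
  then show ?case by (simp add: likelihood_ratio_def)
next
  case (Suc m)
  then show ?case by (intro nn_integral_hist_change_mean_Suc) auto
qed

lemma nn_integral_sqrt_row_likelihood_ratio:
  assumes m: "m < n" and D: "\<And>i. i < N \<Longrightarrow> \<bar>mu' m i - mu m i\<bar> = D"
  shows "(\<integral>\<^sup>+y. ennreal (sqrt (row_likelihood_ratio mu mu' m h y)) \<partial>PiM (row m) noise_law) =
    ennreal (exp (- (real k * D\<^sup>2) / (8 * R\<^sup>2)))"
proof -
  interpret product_sigma_finite noise_law by (rule product_sigma_finite_noise)
  interpret gauss: prob_space "gauss R" by (rule prob_space_gauss[OF R])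
  let ?A = "next_choice h m"
  have A: "?A \<subseteq> {..<N}" by (rule next_choice_subset[OF m])
  have card_A: "card ?A = k" using alg_range[OF m] by (simp add: next_choice_def)
  let ?f = "\<lambda>i y. ennreal (sqrt (gauss_lr R (mu' m i - mu m i) y))"
  let ?g = "\<lambda>c y. if snd c \<in> ?A then ?f (snd c) y else 1"
  have "(\<integral>\<^sup>+y. ennreal (sqrt (row_likelihood_ratio mu mu' m h y)) \<partial>PiM (row m) noise_law) =
      (\<integral>\<^sup>+y. (\<Prod>c\<in>row m. ?g c (y c)) \<partial>PiM (row m) noise_law)"
    unfolding row_likelihood_ratio_def sqrt_prod prod_row[OF A, where f="?f"]
    by (simp add: prod_ennreal gauss_lr_pos less_imp_le)
  also have "\<dots> = (\<Prod>c\<in>row m. integral\<^sup>N (gauss R) (?g c))"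
    by (rule product_nn_integral_prod) (auto simp: row_def)
  also have "\<dots> = (\<Prod>c\<in>row m. if snd c \<in> ?A then ennreal (exp (- D\<^sup>2 / (8 * R\<^sup>2))) else 1)"
  proof (intro prod.cong refl)
    fix c assume "c \<in> row m"
    then have "snd c < N" by (auto simp: row_def)
    then have "(mu' m (snd c) - mu m (snd c))\<^sup>2 = D\<^sup>2" using D by (metis power2_abs)
    then show "integral\<^sup>N (gauss R) (?g c) = (if snd c \<in> ?A then ennreal (exp (- D\<^sup>2 / (8 * R\<^sup>2))) else 1)"
      using gauss.emeasure_space_1 by (simp add: nn_integral_sqrt_gauss_lr[OF R])
  qed
  also have "\<dots> = ennreal (exp (- D\<^sup>2 / (8 * R\<^sup>2))) ^ k"
    using prod_row[OF A, where f="\<lambda>_ _. ennreal (exp (- D\<^sup>2 / (8 * R\<^sup>2)))"] card_A by simp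
  also have "\<dots> = ennreal (exp (- (real k * D\<^sup>2) / (8 * R\<^sup>2)))"
    by (simp add: ennreal_power exp_of_nat_mult[symmetric])
  finally show ?thesis .
qed

lemma nn_integral_sqrt_likelihood_ratio:
  assumes "m \<le> n" and D: "\<And>s i. s < n \<Longrightarrow> i < N \<Longrightarrow> \<bar>mu' s i - mu s i\<bar> = D"
  shows "(\<integral>\<^sup>+\<eta>. ennreal (sqrt (likelihood_ratio mu mu' m \<eta>)) \<partial>P) =
    ennreal (exp (- (real m * real k * D\<^sup>2) / (8 * R\<^sup>2)))"
  using assms(1)
proof (induction m)
  case 0
  interpret prob_space P by (rule prob_space_noise)
  show ?case by (simp add: likelihood_ratio_def emeasure_space_1)
next
  case (Suc m)
  have m: "m < n" using Suc.prems by simp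
  let ?c = "exp (- (real k * D\<^sup>2) / (8 * R\<^sup>2))"
  let ?sqrt_lr = "\<lambda>\<eta>. ennreal (sqrt (likelihood_ratio mu mu' m \<eta>))"
  let ?sqrt_rlr = "\<lambda>h y. ennreal (sqrt (row_likelihood_ratio mu mu' m h y))"
  note [measurable] = measurable_likelihood_ratio measurable_row_likelihood_ratio
  have "(\<integral>\<^sup>+\<eta>. ennreal (sqrt (likelihood_ratio mu mu' (Suc m) \<eta>)) \<partial>P) =
      (\<integral>\<^sup>+\<eta>. ?sqrt_rlr (hist mu m \<eta>) \<eta> * ?sqrt_lr \<eta> \<partial>P)"
    by (simp add: likelihood_ratio_Suc real_sqrt_mult ennreal_mult likelihood_ratio_pos
        row_likelihood_ratio_pos less_imp_le mult_ac)
  also have "\<dots> = (\<integral>\<^sup>+\<eta>. (\<integral>\<^sup>+y. ?sqrt_rlr (hist mu m \<eta>) y \<partial>PiM (row m) noise_law) * ?sqrt_lr \<eta> \<partial>P)"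
  proof (rule nn_integral_hist_fresh_row[OF m])
    show "?sqrt_rlr h y = ?sqrt_rlr h y'" if "\<forall>i. y (m, i) = y' (m, i)" for h y y'
      using row_likelihood_ratio_local[OF that] by simp
    show "?sqrt_lr \<eta> = ?sqrt_lr \<eta>'" if "\<forall>s<m. \<forall>i. \<eta> (s, i) = \<eta>' (s, i)" for \<eta> \<eta>'
      using likelihood_ratio_local[OF _ that] m by simp
  qed measurable
  also have "\<dots> = (\<integral>\<^sup>+\<eta>. ennreal ?c * ?sqrt_lr \<eta> \<partial>P)"
    using m D by (simp add: nn_integral_sqrt_row_likelihood_ratio)
  also have "\<dots> = ennreal ?c * ennreal (exp (- (real m * real k * D\<^sup>2) / (8 * R\<^sup>2)))"
    using Suc.IH m by (simp add: nn_integral_cmult)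
  also have "\<dots> = ennreal (exp (- (real (Suc m) * real k * D\<^sup>2) / (8 * R\<^sup>2)))"
    by (simp add: ennreal_mult'[symmetric] exp_add[symmetric] add_divide_distrib[symmetric] algebra_simps)
  finally show ?case .
qed

text \<open>Le Cam's two-point bound: with the Hellinger affinity \<open>a = \<integral> \<surd>L\<close> and \<open>b = a / 2\<close>, integrating
  \<open>2 b \<surd>L \<le> W + (1 - W) L + b\<^sup>2 (1 + L)\<close> gives \<open>a\<^sup>2 / 2 \<le> \<integral> W + \<integral> (1 - W) L\<close>, and the last
  integral is the expectation of \<open>1 - W\<close> under \<open>mu'\<close>.\<close>

lemma two_point_bound:
  assumes D: "\<And>s i. s < n \<Longrightarrow> i < N \<Longrightarrow> \<bar>mu' s i - mu s i\<bar> = D"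
    and W: "\<And>c. 0 \<le> W c \<and> W c \<le> 1"
  shows "ennreal (exp (- (real n * real k * D\<^sup>2) / (4 * R\<^sup>2)) / 2)
    \<le> (\<integral>\<^sup>+\<eta>. ennreal (W (chosen mu n \<eta>)) \<partial>P) + (\<integral>\<^sup>+\<eta>. ennreal (1 - W (chosen mu' n \<eta>)) \<partial>P)"
proof -
  interpret prob_space P by (rule prob_space_noise)
  define a where "a = exp (- (real n * real k * D\<^sup>2) / (8 * R\<^sup>2))"
  define b where "b = a / 2"
  have a: "0 < a" by (simp add: a_def)
  then have b: "0 \<le> b" by (simp add: b_def)
  let ?L = "likelihood_ratio mu mu' n"
  let ?W = "\<lambda>\<eta>. W (chosen mu n \<eta>)"
  note [measurable] = measurable_likelihood_ratio measurable_fun_chosen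
  have "(\<lambda>c. ennreal (1 - W c)) \<in> borel_measurable (count_space finite_set_lists)"
    by simp
  from measurable_compose[OF measurable_fst this]
  have "(\<lambda>h. ennreal (1 - W (fst h))) \<in> borel_measurable history_space" .
  from nn_integral_hist_change_mean[OF order_refl this, of mu' mu]
  have change: "(\<integral>\<^sup>+\<eta>. ennreal (1 - W (chosen mu' n \<eta>)) \<partial>P) =
      (\<integral>\<^sup>+\<eta>. ennreal (1 - ?W \<eta>) * ennreal (?L \<eta>) \<partial>P)"
    by (simp add: history_def)
  have L_int: "(\<integral>\<^sup>+\<eta>. ennreal (?L \<eta>) \<partial>P) = 1"
    using nn_integral_hist_change_mean[OF order_refl, of "\<lambda>_. 1" mu' mu] by (simp add: emeasure_space_1)
  have sqrt_L_int: "(\<integral>\<^sup>+\<eta>. ennreal (sqrt (?L \<eta>)) \<partial>P) = ennreal a"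
    unfolding a_def by (rule nn_integral_sqrt_likelihood_ratio[OF order_refl D])
  have "ennreal (2 * b) * ennreal a = (\<integral>\<^sup>+\<eta>. ennreal (2 * b) * ennreal (sqrt (?L \<eta>)) \<partial>P)"
    by (simp add: nn_integral_cmult sqrt_L_int)
  also have "\<dots> \<le> (\<integral>\<^sup>+\<eta>. (ennreal (?W \<eta>) + ennreal (1 - ?W \<eta>) * ennreal (?L \<eta>)) +
      (ennreal (b\<^sup>2) + ennreal (b\<^sup>2) * ennreal (?L \<eta>)) \<partial>P)"
    using W likelihood_ratio_pos b by (intro nn_integral_mono le_cam_pointwise_ennreal) auto
  also have "\<dots> = ((\<integral>\<^sup>+\<eta>. ennreal (?W \<eta>) \<partial>P) + (\<integral>\<^sup>+\<eta>. ennreal (1 - ?W \<eta>) * ennreal (?L \<eta>) \<partial>P)) +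
      (ennreal (b\<^sup>2) + ennreal (b\<^sup>2) * 1)"
    by (simp add: nn_integral_add nn_integral_cmult L_int emeasure_space_1)
  finally have "ennreal (a\<^sup>2) \<le> (\<integral>\<^sup>+\<eta>. ennreal (?W \<eta>) \<partial>P) +
      (\<integral>\<^sup>+\<eta>. ennreal (1 - W (chosen mu' n \<eta>)) \<partial>P) + ennreal (a\<^sup>2 / 2)"
    unfolding change b_def using a
    by (simp add: ennreal_mult[symmetric] ennreal_plus[symmetric] power2_eq_square del: ennreal_plus)
  then have "ennreal (a\<^sup>2) - ennreal (a\<^sup>2 / 2) \<le>
      (\<integral>\<^sup>+\<eta>. ennreal (?W \<eta>) \<partial>P) + (\<integral>\<^sup>+\<eta>. ennreal (1 - W (chosen mu' n \<eta>)) \<partial>P)"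
    by (subst ennreal_minus_le_iff) (simp add: add.commute)
  then have "ennreal (a\<^sup>2 / 2) \<le> (\<integral>\<^sup>+\<eta>. ennreal (?W \<eta>) \<partial>P) + (\<integral>\<^sup>+\<eta>. ennreal (1 - W (chosen mu' n \<eta>)) \<partial>P)"
    by (simp add: ennreal_minus)
  moreover have "a\<^sup>2 = exp (- (real n * real k * D\<^sup>2) / (4 * R\<^sup>2))"
    unfolding a_def power2_eq_square exp_add[symmetric] by (simp add: field_simps)
  ultimately show ?thesis by simp
qed

end

section \<open>The hard instance\<close>

lemma ex_binary_digits: "\<exists>v<2 ^ d. \<forall>l<d. odd ((v :: nat) div 2 ^ l) \<longleftrightarrow> l \<in> S"
proof (induction d)
  case (Suc d)
  then obtain v :: nat where v: "v < 2 ^ d" "\<forall>l<d. odd (v div 2 ^ l) \<longleftrightarrow> l \<in> S"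
    by blast
  define w where "w = v + (if d \<in> S then 2 ^ d else 0)"
  have "w < 2 ^ Suc d" using v(1) by (simp add: w_def)
  moreover have "odd (w div 2 ^ l) \<longleftrightarrow> l \<in> S" if "l < Suc d" for l
  proof (cases "l = d")
    case True
    then show ?thesis using v(1) by (simp add: w_def div_add_self2)
  next
    case False
    then have l: "l < d" using that by simp
    then have "(2::nat) ^ d = 2 ^ (d - l) * 2 ^ l" by (simp add: power_add[symmetric])
    then have "(v + 2 ^ d) div 2 ^ l = v div 2 ^ l + 2 ^ (d - l)" by simp
    moreover have "even ((2::nat) ^ (d - l))" using l by simp
    ultimately show ?thesis using v(2) l by (auto simp: w_def)
  qed
  ultimately show ?case by blast
qed simp

lemma sum_involution:
  assumes "\<And>x. x \<in> A \<Longrightarrow> f x \<in> A" "\<And>x. x \<in> A \<Longrightarrow> f (f x) = x"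
  shows "(\<Sum>x\<in>A. g (f x)) = (\<Sum>x\<in>A. g x :: 'b :: comm_monoid_add)"
proof -
  have "bij_betw f A A" by (rule bij_betw_byWitness[where f'=f]) (use assms in auto)
  then show ?thesis by (rule sum.reindex_bij_betw)
qed

lemma sum_le_involution_pairs:
  fixes X r :: "'a \<Rightarrow> 'b :: {ordered_comm_monoid_add, semiring_1}"
  assumes "\<And>x. x \<in> A \<Longrightarrow> f x \<in> A" "\<And>x. x \<in> A \<Longrightarrow> f (f x) = x"
    and "\<And>x. x \<in> A \<Longrightarrow> r x \<le> X x + X (f x)"
  shows "(\<Sum>x\<in>A. r x) \<le> 2 * (\<Sum>x\<in>A. X x)"
proof -
  have "(\<Sum>x\<in>A. r x) \<le> (\<Sum>x\<in>A. X x + X (f x))" by (rule sum_mono) (rule assms(3))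
  also have "\<dots> = 2 * (\<Sum>x\<in>A. X x)"
    using sum_involution[OF assms(1,2), of X] by (simp add: sum.distrib mult_2)
  finally show ?thesis .
qed

lemma ex_ge_average:
  fixes X :: "'a \<Rightarrow> ennreal"
  assumes A: "finite A" "A \<noteq> {}" and sum: "of_nat (card A) * ennreal v \<le> (\<Sum>x\<in>A. X x)"
  shows "\<exists>x\<in>A. ennreal v \<le> X x"
proof -
  have "Max (X ` A) \<in> X ` A" using A by (intro Max_in) auto
  then obtain x where x: "x \<in> A" "X x = Max (X ` A)" by auto
  have "(\<Sum>x\<in>A. X x) \<le> of_nat (card A) * X x"
    using sum_mono[of A X "\<lambda>_. X x"] A x by simp
  with sum have "of_nat (card A) * ennreal v \<le> of_nat (card A) * X x" by (rule order_trans)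
  then have "ennreal v \<le> X x"
    using A by (subst (asm) ennreal_mult_le_mult_iff) (auto simp: card_gt_0_iff)
  with x show ?thesis by blast
qed

lemma nn_integral_cmult_sum:
  assumes "0 \<le> c" and f: "\<And>l. l \<in> L \<Longrightarrow> (\<lambda>x. ennreal (f l x)) \<in> borel_measurable M"
    and f_nonneg: "\<And>l x. 0 \<le> f l x"
  shows "ennreal c * (\<Sum>l\<in>L. \<integral>\<^sup>+x. ennreal (f l x) \<partial>M) = (\<integral>\<^sup>+x. ennreal (c * (\<Sum>l\<in>L. f l x)) \<partial>M)"
proof -
  have sum: "(\<lambda>x. \<Sum>l\<in>L. ennreal (f l x)) = (\<lambda>x. ennreal (\<Sum>l\<in>L. f l x))"
    using f_nonneg by (simp add: sum_ennreal)
  have "(\<lambda>x. \<Sum>l\<in>L. ennreal (f l x)) \<in> borel_measurable M"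
    using f by (rule borel_measurable_sum)
  then have "(\<lambda>x. ennreal (\<Sum>l\<in>L. f l x)) \<in> borel_measurable M" unfolding sum .
  moreover have "(\<Sum>l\<in>L. \<integral>\<^sup>+x. ennreal (f l x) \<partial>M) = (\<integral>\<^sup>+x. ennreal (\<Sum>l\<in>L. f l x) \<partial>M)"
    unfolding sum[symmetric] by (rule nn_integral_sum[symmetric]) (rule f)
  ultimately show ?thesis
    using assms(1) by (simp add: nn_integral_cmult[symmetric] ennreal_mult')
qed

locale hard_instance =
  fixes R B :: real and k T m' :: nat and U :: "'u measure" and alg :: "'u algorithm"
  assumes R: "R > 0" and B: "B > 0" and k: "k > 0" and T: "T > 0" and m': "m' > 0"
    and prob_space_U: "prob_space U"
    and alg_choice_sets: "\<forall>u\<in>space U. \<forall>t H r. alg u t H r \<in> choice_sets k T m' t"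
    and measurable_alg: "\<forall>t H. (\<lambda>(u, r). alg u t H r) \<in> U \<Otimes>\<^sub>M reward_space \<rightarrow>\<^sub>M count_space UNIV"
begin

abbreviation "n \<equiv> T div 2"
abbreviation "N \<equiv> k * 2 ^ (2 * m')"
abbreviation "TB \<equiv> T - T div 2"
abbreviation "groups \<equiv> min m' (T - T div 2)"

definition thetaA :: real where
  "thetaA = R / sqrt (real k * real n)"

definition thetaB :: real where
  "thetaB = 1 / sqrt (real (2 * m'))"

definition theta :: "nat set \<Rightarrow> nat \<Rightarrow> real" where
  "theta S l = (if l < 2 * m' then (if l \<in> S then thetaA else - thetaA)
     else if l < 4 * m' then (if l \<in> S then thetaB else - thetaB) else 0)"

abbreviation mean :: "nat set \<Rightarrow> nat \<Rightarrow> nat \<Rightarrow> real" where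
  "mean S \<equiv> mean_rew (theta S) B k T m'"

lemma thetaA_nonneg: "thetaA \<ge> 0"
  using R by (simp add: thetaA_def)

lemma thetaA_pos: "0 < n \<Longrightarrow> thetaA > 0"
  using R k by (simp add: thetaA_def)

lemma choice_sets_iff:
  "I \<in> choice_sets k T m' t \<longleftrightarrow> I \<subseteq> {..<(if t < n then N else 2 * k)} \<and> card I = k"
  by (simp add: choice_sets_def)

lemma finite_choice_sets: "finite (choice_sets k T m' t)"
  unfolding choice_sets_def by (rule finite_subset[of _ "Pow {..<(if t < n then N else 2 * k)}"]) auto

lemma alg_in_choice_sets:
  "u \<in> space U \<Longrightarrow> alg u t H r \<subseteq> {..<(if t < n then N else 2 * k)} \<and> card (alg u t H r) = k"
  using alg_choice_sets by (simp add: choice_sets_iff)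

lemma finite_alg: "\<forall>u\<in>space U. \<forall>t H r. finite (alg u t H r)"
  using alg_in_choice_sets by (meson finite_lessThan finite_subset)

lemma nth_choices_in_choice_sets:
  assumes "u \<in> space U" "s < t"
  shows "choices alg mu e u t ! s \<in> choice_sets k T m' s"
  using alg_choice_sets assms by (simp add: nth_choices)

lemma gaussian_rounds_seed: "u \<in> space U \<Longrightarrow> gaussian_rounds U alg u R n N k T"
proof -
  assume u: "u \<in> space U"
  have "t < n \<Longrightarrow> alg u t H r \<subseteq> {..<N} \<and> card (alg u t H r) = k" for t H r
    using alg_in_choice_sets[OF u, of t H r] by simp
  then show ?thesis unfolding gaussian_rounds_def using R measurable_alg finite_alg u by auto
qed

lemma noise_space_eq: "u \<in> space U \<Longrightarrow> noise_space R k T m' = gaussian_rounds.P R n N"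
  by (simp add: noise_space_def gaussian_rounds.grid_def[OF gaussian_rounds_seed])

lemma hyper_feat_sign: "l < d \<Longrightarrow> hyper_feat d i l = 1 \<or> hyper_feat d i l = -1"
  by (simp add: hyper_feat_def)

lemma mean_first_half:
  assumes "t < n"
  shows "mean_rew \<theta> B k T m' t i = (\<Sum>l<2 * m'. \<theta> l * hyper_feat (2 * m') i l)"
proof -
  have "mean_rew \<theta> B k T m' t i = (\<Sum>l<4 * m'. \<theta> l * hyper_feat (2 * m') i l)"
    unfolding mean_rew_def feat_def using assms by (simp add: Let_def)
  also have "\<dots> = (\<Sum>l<2 * m'. \<theta> l * hyper_feat (2 * m') i l)"
    by (rule sum.mono_neutral_right) (auto simp: hyper_feat_def)
  finally show ?thesis .
qed

definition group_of :: "nat \<Rightarrow> nat" where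
  "group_of t = (t - n) * groups div TB"

lemma group_of_less: "n \<le> t \<Longrightarrow> t < T \<Longrightarrow> group_of t < groups"
  unfolding group_of_def using m' by (intro less_mult_imp_div_less) (simp add: mult.commute)

lemma mean_second_half:
  assumes "n \<le> t" "t < T"
  shows "mean_rew \<theta> B k T m' t i =
    (if i < k then \<theta> (2 * m' + 2 * group_of t) * (B * sqrt (real (2 * m')))
     else if i < 2 * k then \<theta> (2 * m' + 2 * group_of t + 1) * (B * sqrt (real (2 * m'))) else 0)"
proof -
  let ?l = "if i < k then 2 * m' + 2 * group_of t else 2 * m' + 2 * group_of t + 1"
  let ?b = "B * sqrt (real (2 * m'))"
  have l: "?l < 4 * m'" using group_of_less[OF assms] by simp
  have "feat B k T m' t i l = (if i < 2 * k then (if l = ?l then ?b else 0) else 0)" for l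
    using assms unfolding feat_def group_of_def by (auto simp: Let_def)
  then have "mean_rew \<theta> B k T m' t i = (if i < 2 * k then (\<Sum>l<4 * m'. if l = ?l then \<theta> l * ?b else 0) else 0)"
    unfolding mean_rew_def by (simp add: if_distrib[of "\<lambda>x. _ * x"] cong: if_cong)
  also have "\<dots> = (if i < 2 * k then \<theta> ?l * ?b else 0)"
    using l by (simp add: sum.delta)
  finally show ?thesis by simp
qed

definition round_regret :: "nat set \<Rightarrow> nat set list \<Rightarrow> nat \<Rightarrow> real" where
  "round_regret S c t = Max ((\<lambda>I. \<Sum>i\<in>I. mean S t i) ` choice_sets k T m' t) - (\<Sum>i\<in>c ! t. mean S t i)"

lemma regret_eq_sum_round_regret: "regret (choice_sets k T m') (mean S) T c = (\<Sum>t<T. round_regret S c t)"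
  unfolding regret_def round_regret_def ..

lemma round_regret_ge:
  "I \<in> choice_sets k T m' t \<Longrightarrow> round_regret S c t \<ge> (\<Sum>i\<in>I. mean S t i) - (\<Sum>i\<in>c ! t. mean S t i)"
  unfolding round_regret_def using finite_choice_sets by simp

lemma round_regret_nonneg: "c ! t \<in> choice_sets k T m' t \<Longrightarrow> round_regret S c t \<ge> 0"
  using round_regret_ge[of "c ! t" t S c] by simp

subsection \<open>Rounds of the first half\<close>

definition wrong_sign :: "nat set \<Rightarrow> nat \<Rightarrow> nat \<Rightarrow> bool" where
  "wrong_sign S i l \<longleftrightarrow> theta S l * hyper_feat (2 * m') i l < 0"

definition wrong_count :: "nat set \<Rightarrow> nat \<Rightarrow> nat set list \<Rightarrow> nat" where
  "wrong_count S l c = (\<Sum>s<n. card {i \<in> c ! s. wrong_sign S i l})"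

definition flip_coord :: "nat set \<Rightarrow> nat \<Rightarrow> nat set" where
  "flip_coord S l = (if l \<in> S then S - {l} else insert l S)"

lemma flip_coord_flip_coord [simp]: "flip_coord (flip_coord S l) l = S"
  by (auto simp: flip_coord_def)

lemma theta_flip_coord_other: "l' \<noteq> l \<Longrightarrow> theta (flip_coord S l) l' = theta S l'"
  by (auto simp: theta_def flip_coord_def)

lemma mean_first_half_term:
  assumes "l < 2 * m'" "0 < n"
  shows "theta S l * hyper_feat (2 * m') i l = thetaA - 2 * thetaA * (if wrong_sign S i l then 1 else 0)"
  using hyper_feat_sign[OF assms(1), of i] thetaA_pos[OF assms(2)] assms(1)
  by (auto simp: theta_def wrong_sign_def)

lemma sum_mean_first_half:
  assumes t: "t < n" and I: "finite I"
  shows "(\<Sum>i\<in>I. mean S t i) =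
    real (card I) * (2 * m') * thetaA - 2 * thetaA * (\<Sum>l<2 * m'. real (card {i \<in> I. wrong_sign S i l}))"
proof -
  have "(\<Sum>i\<in>I. mean S t i) = (\<Sum>l<2 * m'. \<Sum>i\<in>I. thetaA - 2 * thetaA * (if wrong_sign S i l then 1 else 0))"
    using t by (simp add: mean_first_half mean_first_half_term sum.swap[of _ I])
  also have "\<dots> = (\<Sum>l<2 * m'. real (card I) * thetaA - 2 * thetaA * real (card {i \<in> I. wrong_sign S i l}))"
    using I by (simp add: sum_subtractf sum_distrib_left[symmetric] sum.If_cases Int_def)
  also have "\<dots> = real (card I) * (2 * m') * thetaA - 2 * thetaA * (\<Sum>l<2 * m'. real (card {i \<in> I. wrong_sign S i l}))"
    by (simp add: sum_subtractf sum_distrib_left)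
  finally show ?thesis .
qed

text \<open>Each block of \<open>2 ^ (2 * m')\<close> arms enumerates all sign vectors, so \<open>k\<close> arms matching \<open>\<theta>\<close> exist.\<close>

lemma ex_aligned_choice:
  assumes t: "t < n"
  shows "\<exists>I\<in>choice_sets k T m' t. \<forall>i\<in>I. \<forall>l<2 * m'. \<not> wrong_sign S i l"
proof -
  obtain v :: nat where v: "v < 2 ^ (2 * m')" "\<forall>l<2 * m'. odd (v div 2 ^ l) \<longleftrightarrow> l \<in> S"
    using ex_binary_digits by blast
  define I where "I = (\<lambda>j. j * 2 ^ (2 * m') + v) ` {..<k}"
  have "card I = k" unfolding I_def by (simp add: card_image inj_on_def)
  moreover have "I \<subseteq> {..<N}"
  proof
    fix i assume "i \<in> I"
    then obtain j where j: "j < k" "i = j * 2 ^ (2 * m') + v" by (auto simp: I_def)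
    have "j * 2 ^ (2 * m') + v < Suc j * 2 ^ (2 * m')" using v(1) by simp
    also have "\<dots> \<le> N" using j(1) by (intro mult_right_mono) auto
    finally show "i \<in> {..<N}" using j by simp
  qed
  moreover have aligned: "\<forall>i\<in>I. \<forall>l<2 * m'. \<not> wrong_sign S i l"
  proof (intro ballI allI impI)
    fix i l assume i: "i \<in> I" and l: "l < 2 * m'"
    obtain j where "i = j * 2 ^ (2 * m') + v" using i by (auto simp: I_def)
    then have "i mod 2 ^ (2 * m') = v" using v(1) by simp
    then have "hyper_feat (2 * m') i l = (if l \<in> S then 1 else -1)"
      using v(2) l unfolding hyper_feat_def by simp
    then show "\<not> wrong_sign S i l" using l thetaA_nonneg by (simp add: wrong_sign_def theta_def)
  qed
  ultimately have "I \<in> choice_sets k T m' t" using t by (simp add: choice_sets_iff)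
  with aligned show ?thesis by blast
qed

lemma round_regret_first_half:
  assumes t: "t < n" and c: "c ! t \<in> choice_sets k T m' t"
  shows "round_regret S c t \<ge> 2 * thetaA * (\<Sum>l<2 * m'. real (card {i \<in> c ! t. wrong_sign S i l}))"
proof -
  obtain I where I: "I \<in> choice_sets k T m' t" "\<forall>i\<in>I. \<forall>l<2 * m'. \<not> wrong_sign S i l"
    using ex_aligned_choice[OF t] by blast
  have "finite I" "card I = k" "finite (c ! t)" "card (c ! t) = k"
    using I(1) c t by (auto simp: choice_sets_iff intro: finite_subset)
  moreover have "(\<Sum>l<2 * m'. real (card {i \<in> I. wrong_sign S i l})) = 0"
    using I(2) by (intro sum.neutral) (auto simp: card_eq_0_iff)
  ultimately show ?thesis
    using round_regret_ge[OF I(1), of S c] sum_mean_first_half[OF t] by simp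
qed

lemma card_wrong_sign_le: "finite C \<Longrightarrow> card C = k \<Longrightarrow> card {i \<in> C. wrong_sign S i l} \<le> k"
  using card_mono[of C "{i \<in> C. wrong_sign S i l}"] by auto

lemma wrong_count_le:
  assumes "\<And>s. s < n \<Longrightarrow> finite (c ! s) \<and> card (c ! s) = k"
  shows "wrong_count S l c \<le> k * n"
proof -
  have "wrong_count S l c \<le> (\<Sum>s<n. k)"
    unfolding wrong_count_def using assms card_wrong_sign_le by (intro sum_mono) auto
  then show ?thesis by (simp add: mult.commute)
qed

lemma wrong_count_flip_coord:
  assumes c: "\<And>s. s < n \<Longrightarrow> finite (c ! s) \<and> card (c ! s) = k" and l: "l < 2 * m'" and "0 < n"
  shows "wrong_count (flip_coord S l) l c = k * n - wrong_count S l c"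
proof -
  have "wrong_sign (flip_coord S l) i l \<longleftrightarrow> \<not> wrong_sign S i l" for i
  proof -
    have "theta (flip_coord S l) l = - theta S l" using l by (simp add: theta_def flip_coord_def)
    moreover have "theta S l * hyper_feat (2 * m') i l \<noteq> 0"
      using l hyper_feat_sign[OF l, of i] thetaA_pos[OF \<open>0 < n\<close>] by (auto simp: theta_def)
    ultimately show ?thesis unfolding wrong_sign_def by (simp add: linorder_not_less order_le_less)
  qed
  then have "{i \<in> c ! s. wrong_sign (flip_coord S l) i l} = c ! s - {i \<in> c ! s. wrong_sign S i l}" for s
    by auto
  then have "int (card {i \<in> c ! s. wrong_sign (flip_coord S l) i l}) = int k - int (card {i \<in> c ! s. wrong_sign S i l})"
    if "s < n" for s
    using c[OF that] card_wrong_sign_le[of "c ! s" S l] by (simp add: card_Diff_subset of_nat_diff)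
  then have "int (wrong_count (flip_coord S l) l c) = int (k * n) - int (wrong_count S l c)"
    unfolding wrong_count_def by (simp add: sum_subtractf)
  then show ?thesis by linarith
qed

lemma mean_flip_coord_diff:
  assumes s: "s < n" and l: "l < 2 * m'"
  shows "\<bar>mean (flip_coord S l) s i - mean S s i\<bar> = 2 * thetaA"
proof -
  have "mean (flip_coord S l) s i - mean S s i =
      (\<Sum>l'<2 * m'. (theta (flip_coord S l) l' - theta S l') * hyper_feat (2 * m') i l')"
    using s by (simp add: mean_first_half sum_subtractf left_diff_distrib)
  also have "\<dots> = (\<Sum>l'<2 * m'. if l' = l then (theta (flip_coord S l) l - theta S l) * hyper_feat (2 * m') i l else 0)"
    by (intro sum.cong refl) (auto simp: theta_flip_coord_other)
  also have "\<dots> = (theta (flip_coord S l) l - theta S l) * hyper_feat (2 * m') i l"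
    using l by simp
  finally have "mean (flip_coord S l) s i - mean S s i = (theta (flip_coord S l) l - theta S l) * hyper_feat (2 * m') i l" .
  moreover have "\<bar>theta (flip_coord S l) l - theta S l\<bar> = 2 * thetaA"
    using l thetaA_nonneg by (auto simp: theta_def flip_coord_def)
  moreover have "\<bar>hyper_feat (2 * m') i l\<bar> = 1" using hyper_feat_sign[OF l, of i] by auto
  ultimately show ?thesis by (simp add: abs_mult)
qed

lemma choices_first_half:
  assumes "u \<in> space U" "s < n" "n \<le> m"
  shows "finite (choices alg mu e u m ! s) \<and> card (choices alg mu e u m ! s) = k"
  using nth_choices_in_choice_sets[OF assms(1), of s m mu e] assms(2,3)
  by (auto simp: choice_sets_iff intro: finite_subset)

lemma thetaA_sq: "0 < n \<Longrightarrow> thetaA\<^sup>2 * (real k * real n) = R\<^sup>2"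
  using k by (simp add: thetaA_def power_divide)

definition wrong_fraction :: "nat set \<Rightarrow> nat \<Rightarrow> nat set list \<Rightarrow> real" where
  "wrong_fraction S l c = min 1 (real (wrong_count S l c) / (real k * real n))"

lemma wrong_fraction_bounds: "0 \<le> wrong_fraction S l c \<and> wrong_fraction S l c \<le> 1"
  by (simp add: wrong_fraction_def)

lemma wrong_count_eq_fraction:
  assumes c: "\<And>s. s < n \<Longrightarrow> finite (c ! s) \<and> card (c ! s) = k" and l: "l < 2 * m'" and n: "0 < n"
  shows "real (wrong_count S l c) = real k * real n * wrong_fraction S l c"
    and "real (wrong_count (flip_coord S l) l c) = real k * real n * (1 - wrong_fraction S l c)"
proof -
  have kn: "0 < real k * real n" using k n by simp
  have "real (wrong_count S l c) \<le> real k * real n"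
    using wrong_count_le[OF c, of S l] by (metis of_nat_le_iff of_nat_mult)
  then have "wrong_fraction S l c = real (wrong_count S l c) / (real k * real n)"
    unfolding wrong_fraction_def using kn by (intro min_absorb2) simp
  then show count: "real (wrong_count S l c) = real k * real n * wrong_fraction S l c"
    using kn by (metis less_irrefl nonzero_mult_div_cancel_left times_divide_eq_right)
  show "real (wrong_count (flip_coord S l) l c) = real k * real n * (1 - wrong_fraction S l c)"
    using wrong_count_flip_coord[OF c l n, of S] wrong_count_le[OF c, of S l] count
    by (simp add: of_nat_diff right_diff_distrib)
qed

text \<open>Flipping coordinate \<open>l\<close> moves every mean reward of the first half by \<open>2 thetaA\<close>, which is
  too little to be detected: the two wrong-sign counts cannot both be small.\<close>

lemma wrong_count_pair_bound:
  assumes u: "u \<in> space U" and l: "l < 2 * m'" and n: "0 < n"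
  shows "ennreal (real k * real n / (2 * exp 1)) \<le>
    (\<integral>\<^sup>+\<eta>. ennreal (real (wrong_count S l (choices alg (mean S) (noise_of T \<eta>) u n))) \<partial>noise_space R k T m') +
    (\<integral>\<^sup>+\<eta>. ennreal (real (wrong_count (flip_coord S l) l
        (choices alg (mean (flip_coord S l)) (noise_of T \<eta>) u n))) \<partial>noise_space R k T m')"
proof -
  interpret G: gaussian_rounds U alg u R n N k T by (rule gaussian_rounds_seed[OF u])
  let ?W = "wrong_fraction S l"
  have kn: "0 < real k * real n" using k n by simp
  have "\<And>s. s < n \<Longrightarrow> finite (G.chosen mu n \<eta> ! s) \<and> card (G.chosen mu n \<eta> ! s) = k" for mu \<eta>
    using choices_first_half[OF u] by simp
  note count = wrong_count_eq_fraction[OF this l n, where S=S]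
  have two_point: "ennreal (exp (- (real n * real k * (2 * thetaA)\<^sup>2) / (4 * R\<^sup>2)) / 2)
     \<le> (\<integral>\<^sup>+\<eta>. ennreal (?W (G.chosen (mean S) n \<eta>)) \<partial>G.P) +
       (\<integral>\<^sup>+\<eta>. ennreal (1 - ?W (G.chosen (mean (flip_coord S l)) n \<eta>)) \<partial>G.P)"
    using mean_flip_coord_diff[OF _ l] wrong_fraction_bounds by (intro G.two_point_bound) auto
  have exponent: "exp (- (real n * real k * (2 * thetaA)\<^sup>2) / (4 * R\<^sup>2)) = exp (-1)"
    using thetaA_sq[OF n] R by (simp add: power_mult_distrib field_simps)
  have "ennreal (real k * real n) * ennreal (exp (-1) / 2) \<le> ennreal (real k * real n) *
      ((\<integral>\<^sup>+\<eta>. ennreal (?W (G.chosen (mean S) n \<eta>)) \<partial>G.P) +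
       (\<integral>\<^sup>+\<eta>. ennreal (1 - ?W (G.chosen (mean (flip_coord S l)) n \<eta>)) \<partial>G.P))"
    using two_point unfolding exponent by (rule mult_left_mono) simp
  also have "\<dots> = (\<integral>\<^sup>+\<eta>. ennreal (real (wrong_count S l (G.chosen (mean S) n \<eta>))) \<partial>G.P) +
      (\<integral>\<^sup>+\<eta>. ennreal (real (wrong_count (flip_coord S l) l (G.chosen (mean (flip_coord S l)) n \<eta>))) \<partial>G.P)"
    using kn G.measurable_fun_chosen by (simp add: count distrib_left nn_integral_cmult ennreal_mult')
  finally show ?thesis
    unfolding noise_space_eq[OF u] using kn by (simp add: ennreal_mult'[symmetric] exp_minus field_simps)
qed

subsection \<open>Rounds of the second half\<close>

lemma group_of_start: "group_of n = 0"
  by (simp add: group_of_def)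

lemma group_of_Suc: "n \<le> t \<Longrightarrow> group_of (Suc t) \<le> group_of t + 1"
proof -
  assume t: "n \<le> t"
  have "group_of (Suc t) = ((t - n) * groups + groups) div TB"
    unfolding group_of_def using t by (simp add: Suc_diff_le add.commute)
  also have "\<dots> \<le> ((t - n) * groups + TB) div TB" by (intro div_le_mono add_left_mono) simp
  also have "\<dots> = group_of t + 1" unfolding group_of_def by (rule div_add_self2) (use T in simp)
  finally show ?thesis .
qed

lemma group_of_last: "groups - 1 \<le> group_of (T - 1)"
proof -
  have mono: "(a - 1) * b \<le> (b - 1) * a" if "a \<le> b" for a b :: nat
  proof -
    have "(a - 1) * b = a * b - b" "(b - 1) * a = a * b - a" by (simp_all add: diff_mult_distrib mult.commute[of b a])
    then show ?thesis using that by simp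
  qed
  have "(groups - 1) * TB \<le> (TB - 1) * groups" by (rule mono[OF min.cobounded2])
  then have "(groups - 1) * TB div TB \<le> (TB - 1) * groups div TB" by (rule div_le_mono)
  moreover have "T - 1 - n = TB - 1" by simp
  ultimately show ?thesis unfolding group_of_def using T by simp
qed

definition group_start :: "nat \<Rightarrow> nat" where
  "group_start j = (LEAST t. n \<le> t \<and> j \<le> group_of t)"

lemma group_start_spec:
  assumes j: "j < groups"
  shows "n \<le> group_start j" "group_start j < T" "group_of (group_start j) = j"
    "\<And>t. n \<le> t \<Longrightarrow> t < group_start j \<Longrightarrow> group_of t < j"
proof -
  have ex: "n \<le> T - 1 \<and> j \<le> group_of (T - 1)" using group_of_last j T by auto
  have L: "n \<le> group_start j \<and> j \<le> group_of (group_start j)"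
    unfolding group_start_def by (rule LeastI[where P="\<lambda>t. n \<le> t \<and> j \<le> group_of t", OF ex])
  show before: "group_of t < j" if "n \<le> t" "t < group_start j" for t
    using not_less_Least[OF that(2)[unfolded group_start_def]] that(1) by simp
  show "n \<le> group_start j" using L by simp
  show "group_start j < T"
    using Least_le[where P="\<lambda>t. n \<le> t \<and> j \<le> group_of t", OF ex] T by (simp add: group_start_def)
  show "group_of (group_start j) = j"
  proof (cases "group_start j = n")
    case True
    then show ?thesis using L group_of_start by simp
  next
    case False
    then obtain t where t: "group_start j = Suc t" "n \<le> t" using L by (cases "group_start j") auto
    then have "group_of t < j" using before[of t] by simp
    then show ?thesis using group_of_Suc[OF t(2)] L t(1) by simp
  qed
qed

lemma inj_on_group_start: "inj_on group_start {..<groups}"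
  by (rule inj_on_inverseI[where g=group_of]) (simp add: group_start_spec(3))

definition flip_pair :: "nat \<Rightarrow> nat set \<Rightarrow> nat set" where
  "flip_pair j S = flip_coord (flip_coord S (2 * m' + 2 * j)) (2 * m' + 2 * j + 1)"

lemma mem_flip_pair:
  "x \<in> flip_pair j S \<longleftrightarrow> (if x = 2 * m' + 2 * j \<or> x = 2 * m' + 2 * j + 1 then x \<notin> S else x \<in> S)"
  by (auto simp: flip_pair_def flip_coord_def)

lemma flip_pair_flip_pair [simp]: "flip_pair j (flip_pair j S) = S"
  by (rule set_eqI) (simp add: mem_flip_pair)

lemma flip_pair_in_Pow: "j < m' \<Longrightarrow> S \<in> Pow {..<4 * m'} \<Longrightarrow> flip_pair j S \<in> Pow {..<4 * m'}"
  by (auto simp: mem_flip_pair split: if_split_asm)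

text \<open>Before group \<open>j\<close> starts, nothing depends on its two coordinates, so the algorithm plays the
  same arms under \<open>S\<close> and under \<open>flip_pair j S\<close> up to and including round \<open>group_start j\<close>.\<close>

lemma mean_before_group_start:
  assumes j: "j < groups" and t: "t < group_start j"
  shows "mean (flip_pair j S) t i = mean S t i"
proof -
  have theta: "theta (flip_pair j S) l = theta S l" if "l \<noteq> 2 * m' + 2 * j" "l \<noteq> 2 * m' + 2 * j + 1" for l
    using that by (simp add: theta_def mem_flip_pair)
  show ?thesis
  proof (cases "t < n")
    case True
    then show ?thesis using theta by (auto simp: mean_first_half intro!: sum.cong)
  next
    case False
    then have t': "n \<le> t" "t < T" using t group_start_spec(2)[OF j] by auto
    then have "group_of t < j" using group_start_spec(4)[OF j _ t] by simp
    then show ?thesis using theta by (simp add: mean_second_half[OF t'])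
  qed
qed

lemma nth_choices_group_start:
  assumes j: "j < groups"
  shows "choices alg (mean (flip_pair j S)) e u T ! group_start j = choices alg (mean S) e u T ! group_start j"
proof -
  let ?t = "group_start j"
  have eq: "\<forall>s<?t. \<forall>i. mean (flip_pair j S) s i + e s i = mean S s i + e s i"
    using mean_before_group_start[OF j] by simp
  have "choices alg (mean (flip_pair j S)) e u T ! ?t = choices alg (mean (flip_pair j S)) e u (Suc ?t) ! ?t"
    using group_start_spec(2)[OF j] by (intro nth_choices_le) auto
  also have "\<dots> = choices alg (mean S) e u (Suc ?t) ! ?t"
    unfolding nth_choices_last choices_cong_rewards[OF eq] observed_rewards_cong[OF eq] ..
  also have "\<dots> = choices alg (mean S) e u T ! ?t"
    using group_start_spec(2)[OF j] by (intro nth_choices_le[symmetric]) auto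
  finally show ?thesis .
qed

lemma mean_group_start:
  assumes j: "j < groups"
  shows "mean S (group_start j) i =
    (if i < k then (if 2 * m' + 2 * j \<in> S then B else - B)
     else if i < 2 * k then (if 2 * m' + 2 * j + 1 \<in> S then B else - B) else 0)"
proof -
  have "thetaB * (B * sqrt (real (2 * m'))) = B" using m' by (simp add: thetaB_def)
  then show ?thesis
    using j unfolding mean_second_half[OF group_start_spec(1,2)[OF j]] group_start_spec(3)[OF j]
    by (auto simp: theta_def)
qed

lemma mean_group_start_flip_pair:
  "j < groups \<Longrightarrow> mean (flip_pair j S) (group_start j) i = - mean S (group_start j) i"
  by (simp add: mean_group_start mem_flip_pair)

text \<open>When the two coordinates of group \<open>j\<close> differ in sign, the arm blocks \<open>{..<k}\<close> and
  \<open>{k..<2 * k}\<close> earn \<open>k B\<close> and \<open>- k B\<close> at round \<open>group_start j\<close>, in one order under \<open>S\<close> and in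
  the other under \<open>flip_pair j S\<close>.\<close>

lemma round_regret_group_start_pair:
  assumes j: "j < groups" and c: "c ! group_start j \<in> choice_sets k T m' (group_start j)"
    and differ: "(2 * m' + 2 * j \<in> S) \<noteq> (2 * m' + 2 * j + 1 \<in> S)"
  shows "round_regret S c (group_start j) + round_regret (flip_pair j S) c (group_start j) \<ge> 2 * B * k"
proof -
  let ?t = "group_start j"
  let ?M = "\<lambda>S'. Max ((\<lambda>I. \<Sum>i\<in>I. mean S' ?t i) ` choice_sets k T m' ?t)"
  have blocks: "{..<k} \<in> choice_sets k T m' ?t" "{k..<2 * k} \<in> choice_sets k T m' ?t"
    using group_start_spec(1)[OF j] by (auto simp: choice_sets_iff)
  have M: "?M S' \<ge> (\<Sum>i\<in>I. mean S' ?t i)" if "I \<in> choice_sets k T m' ?t" for S' I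
    using that finite_choice_sets by simp
  have neg: "(\<Sum>i\<in>I. mean (flip_pair j S) ?t i) = - (\<Sum>i\<in>I. mean S ?t i)" for I
    by (simp add: mean_group_start_flip_pair[OF j] sum_negf)
  have sum1: "(\<Sum>i\<in>{..<k}. mean S ?t i) = real k * (if 2 * m' + 2 * j \<in> S then B else - B)"
    and sum2: "(\<Sum>i\<in>{k..<2 * k}. mean S ?t i) = real k * (if 2 * m' + 2 * j + 1 \<in> S then B else - B)"
    by (simp_all add: mean_group_start[OF j])
  have "?M S \<ge> real k * (if 2 * m' + 2 * j \<in> S then B else - B)"
    "?M S \<ge> real k * (if 2 * m' + 2 * j + 1 \<in> S then B else - B)"
    "?M (flip_pair j S) \<ge> - real k * (if 2 * m' + 2 * j \<in> S then B else - B)"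
    "?M (flip_pair j S) \<ge> - real k * (if 2 * m' + 2 * j + 1 \<in> S then B else - B)"
    using M[OF blocks(1), of S] M[OF blocks(2), of S] M[OF blocks(1), of "flip_pair j S"]
      M[OF blocks(2), of "flip_pair j S"] sum1 sum2 neg[of "{..<k}"] neg[of "{k..<2 * k}"]
    by simp_all
  moreover have "round_regret S c ?t + round_regret (flip_pair j S) c ?t = ?M S + ?M (flip_pair j S)"
    unfolding round_regret_def neg by simp
  ultimately show ?thesis using differ B by (auto simp: algebra_simps split: if_splits)
qed

lemma sum_sign_patterns_differ:
  assumes p: "p < 4 * m'" and "p \<noteq> q"
  shows "(\<Sum>S\<in>Pow {..<4 * m'}. if (p \<in> S) = (q \<in> S) then 0 else 1 :: real) = 2 ^ (4 * m') / 2"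
proof -
  let ?d = "\<lambda>S. if (p \<in> S) = (q \<in> S) then 0 else 1 :: real"
  have "(\<Sum>S\<in>Pow {..<4 * m'}. ?d (flip_coord S p)) = (\<Sum>S\<in>Pow {..<4 * m'}. ?d S)"
    using p by (intro sum_involution) (auto simp: flip_coord_def)
  moreover have "?d (flip_coord S p) = 1 - ?d S" for S
    using \<open>p \<noteq> q\<close> by (auto simp: flip_coord_def)
  ultimately have "real (card (Pow {..<4 * m'})) - (\<Sum>S\<in>Pow {..<4 * m'}. ?d S) = (\<Sum>S\<in>Pow {..<4 * m'}. ?d S)"
    by (simp add: sum_subtractf)
  then show ?thesis by (simp add: card_Pow)
qed

lemma sum_round_regret_group_start:
  assumes u: "u \<in> space U" and j: "j < groups"
  shows "(\<Sum>S\<in>Pow {..<4 * m'}. round_regret S (choices alg (mean S) e u T) (group_start j))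
    \<ge> 2 ^ (4 * m') * B * real k / 2"
proof -
  let ?t = "group_start j" and ?p = "2 * m' + 2 * j" and ?q = "2 * m' + 2 * j + 1"
  have in_choice_sets: "choices alg mu e u T ! ?t \<in> choice_sets k T m' ?t" for mu
    using nth_choices_in_choice_sets[OF u group_start_spec(2)[OF j]] .
  have "(\<Sum>S\<in>Pow {..<4 * m'}. if (?p \<in> S) = (?q \<in> S) then 0 else 2 * B * real k)
      \<le> 2 * (\<Sum>S\<in>Pow {..<4 * m'}. round_regret S (choices alg (mean S) e u T) ?t)"
  proof (rule sum_le_involution_pairs)
    fix S
    have "round_regret (flip_pair j S) (choices alg (mean (flip_pair j S)) e u T) ?t =
        round_regret (flip_pair j S) (choices alg (mean S) e u T) ?t"
      unfolding round_regret_def nth_choices_group_start[OF j] ..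
    then show "(if (?p \<in> S) = (?q \<in> S) then 0 else 2 * B * real k) \<le>
        round_regret S (choices alg (mean S) e u T) ?t +
        round_regret (flip_pair j S) (choices alg (mean (flip_pair j S)) e u T) ?t"
      using round_regret_group_start_pair[OF j in_choice_sets]
        round_regret_nonneg[OF in_choice_sets] by (simp add: add_nonneg_nonneg)
  qed (use j flip_pair_in_Pow in auto)
  also have "(\<Sum>S\<in>Pow {..<4 * m'}. if (?p \<in> S) = (?q \<in> S) then 0 else 2 * B * real k) =
      2 * B * real k * (\<Sum>S\<in>Pow {..<4 * m'}. if (?p \<in> S) = (?q \<in> S) then 0 else 1 :: real)"
    by (simp add: sum_distrib_left if_distrib cong: if_cong)
  also have "\<dots> = 2 * B * real k * (2 ^ (4 * m') / 2)"
    using j by (subst sum_sign_patterns_differ) auto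
  finally show ?thesis by (simp add: algebra_simps)
qed

lemma regret_ge_phases:
  assumes u: "u \<in> space U"
  shows "regret (choice_sets k T m') (mean S) T (choices alg (mean S) e u T) \<ge>
    2 * thetaA * (\<Sum>l<2 * m'. real (wrong_count S l (choices alg (mean S) e u n))) +
    (\<Sum>j<groups. round_regret S (choices alg (mean S) e u T) (group_start j))"
proof -
  let ?c = "choices alg (mean S) e u T"
  have in_choice_sets: "?c ! t \<in> choice_sets k T m' t" if "t < T" for t
    using nth_choices_in_choice_sets[OF u that] .
  have prefix: "?c ! t = choices alg (mean S) e u n ! t" if "t < n" for t
    using that by (intro nth_choices_le) auto
  have "2 * thetaA * (\<Sum>l<2 * m'. real (wrong_count S l (choices alg (mean S) e u n)))
      = (\<Sum>t<n. 2 * thetaA * (\<Sum>l<2 * m'. real (card {i \<in> ?c ! t. wrong_sign S i l})))"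
    unfolding wrong_count_def by (simp add: sum_distrib_left prefix sum.swap[of _ "{..<2 * m'}"])
  also have "\<dots> \<le> (\<Sum>t<n. round_regret S ?c t)"
  proof (rule sum_mono)
    fix t assume "t \<in> {..<n}"
    then show "2 * thetaA * (\<Sum>l<2 * m'. real (card {i \<in> ?c ! t. wrong_sign S i l})) \<le> round_regret S ?c t"
      using in_choice_sets[of t] by (intro round_regret_first_half) auto
  qed
  finally have first: "2 * thetaA * (\<Sum>l<2 * m'. real (wrong_count S l (choices alg (mean S) e u n)))
      \<le> (\<Sum>t<n. round_regret S ?c t)" .
  have disjoint: "{..<n} \<inter> group_start ` {..<groups} = {}"
    using group_start_spec(1) by (auto simp: not_less[symmetric])
  have "(\<Sum>t<n. round_regret S ?c t) + (\<Sum>j<groups. round_regret S ?c (group_start j))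
      = (\<Sum>t\<in>{..<n} \<union> group_start ` {..<groups}. round_regret S ?c t)"
    using disjoint by (simp add: sum.union_disjoint sum.reindex[OF inj_on_group_start])
  also have "\<dots> \<le> (\<Sum>t<T. round_regret S ?c t)"
  proof (rule sum_mono2)
    show "{..<n} \<union> group_start ` {..<groups} \<subseteq> {..<T}" using group_start_spec(2) by auto
    show "0 \<le> round_regret S ?c t" if "t \<in> {..<T} - ({..<n} \<union> group_start ` {..<groups})" for t
      using that in_choice_sets round_regret_nonneg by simp
  qed simp
  finally show ?thesis
    using first by (simp add: regret_eq_sum_round_regret)
qed

subsection \<open>Averaging over the sign patterns\<close>

lemma sum_wrong_count_bound:
  assumes u: "u \<in> space U" and l: "l < 2 * m'" and n: "0 < n"
  shows "ennreal (2 ^ (4 * m') * (real k * real n / (2 * exp 1))) \<le> 2 * (\<Sum>S\<in>Pow {..<4 * m'}.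
    \<integral>\<^sup>+\<eta>. ennreal (real (wrong_count S l (choices alg (mean S) (noise_of T \<eta>) u n))) \<partial>noise_space R k T m')"
proof -
  have card: "ennreal (2 ^ (4 * m') * x) = (\<Sum>S\<in>Pow {..<4 * m'}. ennreal x)" if "0 \<le> x" for x
    using that by (simp add: card_Pow ennreal_mult ennreal_power[symmetric])
  have "ennreal (2 ^ (4 * m') * (real k * real n / (2 * exp 1))) =
      (\<Sum>S\<in>Pow {..<4 * m'}. ennreal (real k * real n / (2 * exp 1)))"
    by (rule card) simp
  also have "\<dots> \<le> 2 * (\<Sum>S\<in>Pow {..<4 * m'}.
      \<integral>\<^sup>+\<eta>. ennreal (real (wrong_count S l (choices alg (mean S) (noise_of T \<eta>) u n))) \<partial>noise_space R k T m')"
  proof (rule sum_le_involution_pairs)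
    show "flip_coord S l \<in> Pow {..<4 * m'}" if "S \<in> Pow {..<4 * m'}" for S
      using that l by (auto simp: flip_coord_def)
  qed (simp_all add: wrong_count_pair_bound[OF u l n])
  finally show ?thesis .
qed

lemma sum_phase_A_bound:
  assumes u: "u \<in> space U"
  shows "ennreal (2 ^ (4 * m') * (real m' * R * sqrt (real k * real n) / exp 1)) \<le>
    (\<Sum>S\<in>Pow {..<4 * m'}. \<integral>\<^sup>+\<eta>. ennreal (2 * thetaA *
      (\<Sum>l<2 * m'. real (wrong_count S l (choices alg (mean S) (noise_of T \<eta>) u n)))) \<partial>noise_space R k T m')"
proof (cases "n = 0")
  case False
  then have n: "0 < n" by simp
  interpret G: gaussian_rounds U alg u R n N k T by (rule gaussian_rounds_seed[OF u])
  let ?wc = "\<lambda>S l \<eta>. real (wrong_count S l (G.chosen (mean S) n \<eta>))"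
  define c where "c = 2 ^ (4 * m') * (real k * real n / (2 * exp 1))"
  have c: "0 \<le> c" by (simp add: c_def)
  have "thetaA * (real k * real n) = R * sqrt (real k * real n)"
    using k n by (simp add: thetaA_def field_simps)
  then have "2 * (2 ^ (4 * m') * (real m' * R * sqrt (real k * real n) / exp 1)) =
      2 * thetaA * (real (2 * m') * c)"
    by (simp add: c_def field_simps)
  then have "ennreal (2 * (2 ^ (4 * m') * (real m' * R * sqrt (real k * real n) / exp 1))) =
      ennreal (2 * thetaA) * (\<Sum>l<2 * m'. ennreal c)"
    using thetaA_nonneg c by (simp add: ennreal_mult'[symmetric] ennreal_of_nat_eq_real_of_nat)
  also have "\<dots> \<le> ennreal (2 * thetaA) * (\<Sum>l<2 * m'. 2 * (\<Sum>S\<in>Pow {..<4 * m'}. \<integral>\<^sup>+\<eta>. ennreal (?wc S l \<eta>) \<partial>G.P))"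
    unfolding c_def using sum_wrong_count_bound[OF u _ n] noise_space_eq[OF u]
    by (intro mult_left_mono sum_mono) auto
  also have "\<dots> = 2 * (\<Sum>S\<in>Pow {..<4 * m'}. ennreal (2 * thetaA) * (\<Sum>l<2 * m'. \<integral>\<^sup>+\<eta>. ennreal (?wc S l \<eta>) \<partial>G.P))"
    by (simp add: sum_distrib_left sum.swap[of _ "{..<2 * m'}"] mult.left_commute)
  also have "\<dots> = 2 * (\<Sum>S\<in>Pow {..<4 * m'}. \<integral>\<^sup>+\<eta>. ennreal (2 * thetaA * (\<Sum>l<2 * m'. ?wc S l \<eta>)) \<partial>G.P)"
  proof (intro arg_cong[where f="\<lambda>x. 2 * x"] sum.cong refl)
    fix S
    show "ennreal (2 * thetaA) * (\<Sum>l<2 * m'. \<integral>\<^sup>+\<eta>. ennreal (?wc S l \<eta>) \<partial>G.P) =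
        (\<integral>\<^sup>+\<eta>. ennreal (2 * thetaA * (\<Sum>l<2 * m'. ?wc S l \<eta>)) \<partial>G.P)"
      using thetaA_nonneg by (intro nn_integral_cmult_sum G.measurable_fun_chosen) simp_all
  qed
  finally have "ennreal (2 * (2 ^ (4 * m') * (real m' * R * sqrt (real k * real n) / exp 1))) \<le>
    2 * (\<Sum>S\<in>Pow {..<4 * m'}. \<integral>\<^sup>+\<eta>. ennreal (2 * thetaA * (\<Sum>l<2 * m'. ?wc S l \<eta>)) \<partial>G.P)" .
  moreover have "ennreal x \<le> y" if "ennreal (2 * x) \<le> 2 * y" "0 \<le> x" for x y
    using that by (simp add: ennreal_mult'' ennreal_mult_le_mult_iff)
  ultimately show ?thesis
    unfolding noise_space_eq[OF u] using R by simp
qed simp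

lemma phase_B_nonneg:
  "u \<in> space U \<Longrightarrow> 0 \<le> (\<Sum>j<groups. round_regret S (choices alg mu e u T) (group_start j))"
  using nth_choices_in_choice_sets group_start_spec(2) by (intro sum_nonneg round_regret_nonneg) auto

lemma sum_phase_B_bound:
  assumes u: "u \<in> space U"
  shows "ennreal (2 ^ (4 * m') * (B * real k * real groups / 2)) \<le> (\<Sum>S\<in>Pow {..<4 * m'}. \<integral>\<^sup>+\<eta>.
    ennreal (\<Sum>j<groups. round_regret S (choices alg (mean S) (noise_of T \<eta>) u T) (group_start j)) \<partial>noise_space R k T m')"
proof -
  interpret G: gaussian_rounds U alg u R n N k T by (rule gaussian_rounds_seed[OF u])
  interpret P: prob_space G.P by (rule G.prob_space_noise)
  let ?B = "\<lambda>S \<eta>. \<Sum>j<groups. round_regret S (G.chosen (mean S) T \<eta>) (group_start j)"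
  have "2 ^ (4 * m') * (B * real k * real groups / 2) = (\<Sum>j<groups. 2 ^ (4 * m') * B * real k / 2)"
    by simp
  also have "\<dots> \<le> (\<Sum>j<groups. \<Sum>S\<in>Pow {..<4 * m'}. round_regret S (G.chosen (mean S) T \<eta>) (group_start j))" for \<eta>
    using sum_round_regret_group_start[OF u] by (intro sum_mono) simp
  finally have pointwise: "2 ^ (4 * m') * (B * real k * real groups / 2) \<le> (\<Sum>S\<in>Pow {..<4 * m'}. ?B S \<eta>)" for \<eta>
    by (simp add: sum.swap[of _ "{..<groups}"])
  have "ennreal (2 ^ (4 * m') * (B * real k * real groups / 2)) =
      (\<integral>\<^sup>+\<eta>. ennreal (2 ^ (4 * m') * (B * real k * real groups / 2)) \<partial>G.P)"
    by (simp add: P.emeasure_space_1)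
  also have "\<dots> \<le> (\<integral>\<^sup>+\<eta>. (\<Sum>S\<in>Pow {..<4 * m'}. ennreal (?B S \<eta>)) \<partial>G.P)"
  proof (rule nn_integral_mono)
    fix \<eta>
    have "ennreal (2 ^ (4 * m') * (B * real k * real groups / 2)) \<le> ennreal (\<Sum>S\<in>Pow {..<4 * m'}. ?B S \<eta>)"
      by (rule ennreal_leI[OF pointwise])
    also have "\<dots> = (\<Sum>S\<in>Pow {..<4 * m'}. ennreal (?B S \<eta>))"
      using phase_B_nonneg[OF u] by (simp add: sum_ennreal)
    finally show "ennreal (2 ^ (4 * m') * (B * real k * real groups / 2)) \<le> (\<Sum>S\<in>Pow {..<4 * m'}. ennreal (?B S \<eta>))" .
  qed
  also have "\<dots> = (\<Sum>S\<in>Pow {..<4 * m'}. \<integral>\<^sup>+\<eta>. ennreal (?B S \<eta>) \<partial>G.P)"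
    by (intro nn_integral_sum G.measurable_fun_chosen)
  finally show ?thesis unfolding noise_space_eq[OF u] .
qed

definition regret_lower_bound :: real where
  "regret_lower_bound = real m' * R * sqrt (real k * real n) / exp 1 + B * real k * real groups / 2"

lemma sum_expected_regret_seed:
  assumes u: "u \<in> space U"
  shows "ennreal (2 ^ (4 * m') * regret_lower_bound) \<le> (\<Sum>S\<in>Pow {..<4 * m'}. \<integral>\<^sup>+\<eta>.
    ennreal (regret (choice_sets k T m') (mean S) T (choices alg (mean S) (noise_of T \<eta>) u T)) \<partial>noise_space R k T m')"
proof -
  interpret G: gaussian_rounds U alg u R n N k T by (rule gaussian_rounds_seed[OF u])
  define A where "A S \<eta> = 2 * thetaA * (\<Sum>l<2 * m'. real (wrong_count S l (G.chosen (mean S) n \<eta>)))" for S \<eta>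
  define Bs where "Bs S \<eta> = (\<Sum>j<groups. round_regret S (G.chosen (mean S) T \<eta>) (group_start j))" for S \<eta>
  have A_nonneg: "0 \<le> A S \<eta>" for S \<eta>
    unfolding A_def using thetaA_nonneg by (intro mult_nonneg_nonneg) (simp_all add: sum_nonneg)
  have Bs_nonneg: "0 \<le> Bs S \<eta>" for S \<eta>
    unfolding Bs_def by (rule phase_B_nonneg[OF u])
  have [measurable]: "(\<lambda>\<eta>. ennreal (A S \<eta>)) \<in> borel_measurable G.P" "(\<lambda>\<eta>. ennreal (Bs S \<eta>)) \<in> borel_measurable G.P"
    for S unfolding A_def Bs_def by (rule G.measurable_fun_chosen)+
  have "ennreal (2 ^ (4 * m') * regret_lower_bound) \<le>
      (\<Sum>S\<in>Pow {..<4 * m'}. \<integral>\<^sup>+\<eta>. ennreal (A S \<eta>) \<partial>G.P) + (\<Sum>S\<in>Pow {..<4 * m'}. \<integral>\<^sup>+\<eta>. ennreal (Bs S \<eta>) \<partial>G.P)"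
    using add_mono[OF sum_phase_A_bound[OF u] sum_phase_B_bound[OF u]] R B
    unfolding noise_space_eq[OF u]
    by (simp add: regret_lower_bound_def A_def Bs_def distrib_left ennreal_plus[symmetric] del: ennreal_plus)
  also have "\<dots> = (\<Sum>S\<in>Pow {..<4 * m'}. \<integral>\<^sup>+\<eta>. ennreal (A S \<eta>) + ennreal (Bs S \<eta>) \<partial>G.P)"
    by (simp add: nn_integral_add sum.distrib)
  also have "\<dots> \<le> (\<Sum>S\<in>Pow {..<4 * m'}. \<integral>\<^sup>+\<eta>.
      ennreal (regret (choice_sets k T m') (mean S) T (G.chosen (mean S) T \<eta>)) \<partial>G.P)"
  proof (intro sum_mono nn_integral_mono)
    fix S \<eta>
    have "ennreal (A S \<eta> + Bs S \<eta>) \<le> ennreal (regret (choice_sets k T m') (mean S) T (G.chosen (mean S) T \<eta>))"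
      unfolding A_def Bs_def by (rule ennreal_leI[OF regret_ge_phases[OF u]])
    then show "ennreal (A S \<eta>) + ennreal (Bs S \<eta>) \<le>
        ennreal (regret (choice_sets k T m') (mean S) T (G.chosen (mean S) T \<eta>))"
      using A_nonneg[of S \<eta>] Bs_nonneg[of S \<eta>] by simp
  qed
  finally show ?thesis unfolding noise_space_eq[OF u] .
qed

lemma measurable_regret:
  "(\<lambda>\<omega>. ennreal (regret (choice_sets k T m') (mean S) T (choices alg (mean S) (noise_of T (snd \<omega>)) (fst \<omega>) T)))
     \<in> borel_measurable (U \<Otimes>\<^sub>M noise_space R k T m')"
proof -
  have "(\<lambda>\<omega>. noise_of T (snd \<omega>) s i) \<in> borel_measurable (U \<Otimes>\<^sub>M noise_space R k T m')" for s i
    unfolding noise_space_def using measurable_compose[OF measurable_snd measurable_noise_of] .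
  from measurable_choices[OF measurable_alg finite_alg measurable_fst this]
  have "(\<lambda>\<omega>. choices alg (mean S) (noise_of T (snd \<omega>)) (fst \<omega>) T)
      \<in> U \<Otimes>\<^sub>M noise_space R k T m' \<rightarrow>\<^sub>M count_space finite_set_lists" .
  then show ?thesis by (rule measurable_compose) simp
qed

lemma ex_hard_sign_pattern:
  "\<exists>S\<in>Pow {..<4 * m'}. ennreal regret_lower_bound \<le> exp_regret U alg R B k T m' (theta S)"
proof (rule ex_ge_average)
  interpret noise: prob_space "noise_space R k T m'"
    unfolding noise_space_def by (intro prob_space_PiM prob_space_gauss[OF R])
  interpret U: prob_space U by (rule prob_space_U)
  let ?regret = "\<lambda>S u \<eta>. ennreal (regret (choice_sets k T m') (mean S) T (choices alg (mean S) (noise_of T \<eta>) u T))"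
  have "of_nat (card (Pow {..<4 * m'})) * ennreal regret_lower_bound =
      (\<integral>\<^sup>+u. ennreal (2 ^ (4 * m') * regret_lower_bound) \<partial>U)"
    using R B by (simp add: U.emeasure_space_1 card_Pow regret_lower_bound_def ennreal_mult ennreal_power[symmetric])
  also have "\<dots> \<le> (\<integral>\<^sup>+u. (\<Sum>S\<in>Pow {..<4 * m'}. \<integral>\<^sup>+\<eta>. ?regret S u \<eta> \<partial>noise_space R k T m') \<partial>U)"
    by (intro nn_integral_mono sum_expected_regret_seed)
  also have "\<dots> = (\<Sum>S\<in>Pow {..<4 * m'}. exp_regret U alg R B k T m' (theta S))"
  proof -
    have "(\<lambda>u. \<integral>\<^sup>+\<eta>. ?regret S u \<eta> \<partial>noise_space R k T m') \<in> borel_measurable U" for S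
      using noise.borel_measurable_nn_integral_fst[OF measurable_regret] by simp
    then show ?thesis
      unfolding exp_regret_def noise.nn_integral_fst[OF measurable_regret, symmetric]
      by (subst nn_integral_sum) simp_all
  qed
  finally show "of_nat (card (Pow {..<4 * m'})) * ennreal regret_lower_bound \<le>
      (\<Sum>S\<in>Pow {..<4 * m'}. exp_regret U alg R B k T m' (theta S))" .
qed auto

lemma sqrt_kT_le: "2 \<le> T \<Longrightarrow> sqrt (real k * real T) \<le> 2 * sqrt (real k * real n)"
proof -
  assume "2 \<le> T"
  then have "T \<le> 4 * n" by presburger
  then have "real k * real T \<le> real k * (4 * real n)" by (intro mult_left_mono) simp_all
  then have "real k * real T \<le> 4 * (real k * real n)" by (simp add: algebra_simps)
  then have "sqrt (real k * real T) \<le> sqrt (4 * (real k * real n))" by (rule real_sqrt_le_mono)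
  then show ?thesis by (simp add: real_sqrt_mult)
qed

lemma min_regret_le_regret_lower_bound:
  "(1/24) * min (R * real (4 * m') * sqrt (real k * real T) + B * real (4 * m') * real k) (B * real k * real T)
     \<le> regret_lower_bound"
proof -
  let ?X = "R * real (4 * m') * sqrt (real k * real T)"
  let ?Y = "B * real (4 * m') * real k" and ?Z = "B * real k * real T"
  have A: "0 \<le> real m' * R * sqrt (real k * real n) / exp 1" using R by simp
  have B_part: "min ?Y ?Z / 24 \<le> B * real k * real groups / 2"
  proof -
    have "min (4 * real m') (real T) \<le> 4 * real groups" by (cases "m' \<le> T - n") auto
    then have "B * real k * min (4 * real m') (real T) \<le> B * real k * (4 * real groups)"
      using B by (intro mult_left_mono) auto
    moreover have "min ?Y ?Z = B * real k * min (4 * real m') (real T)"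
      using B by (simp add: min_mult_distrib_left algebra_simps)
    ultimately have "min ?Y ?Z \<le> 4 * (B * real k * real groups)" by (simp add: algebra_simps)
    moreover have "0 \<le> B * real k * real groups" using B by simp
    ultimately show ?thesis by linarith
  qed
  show ?thesis
  proof (cases "T = 1")
    case True
    have "(1/24) * min (?X + ?Y) ?Z \<le> ?Z / 24" by simp
    also have "\<dots> \<le> B * real k * real groups / 2" using True B m' by simp
    finally have "(1/24) * min (?X + ?Y) ?Z \<le> B * real k * real groups / 2" .
    then show ?thesis using A unfolding regret_lower_bound_def by linarith
  next
    case False
    then have "2 \<le> T" using T by simp
    have "?X / 24 \<le> real m' * R * sqrt (real k * real n) / 3"
      using sqrt_kT_le[OF \<open>2 \<le> T\<close>] R by (simp add: mult_left_mono)
    also have "\<dots> \<le> real m' * R * sqrt (real k * real n) / exp 1"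
      using exp_le R by (intro divide_left_mono) auto
    finally have "?X / 24 \<le> real m' * R * sqrt (real k * real n) / exp 1" .
    moreover have "0 \<le> ?X" using R by simp
    then have "min (?X + ?Y) ?Z \<le> ?X + min ?Y ?Z" by (auto simp: min_def)
    ultimately show ?thesis using B_part unfolding regret_lower_bound_def by linarith
  qed
qed

lemma ex_hard_theta:
  "\<exists>\<theta>::nat \<Rightarrow> real.
     (\<forall>l < 2 * m'. \<theta> l = R / sqrt (real k * real (T div 2)) \<or> \<theta> l = - (R / sqrt (real k * real (T div 2))))
   \<and> (\<forall>l. 2 * m' \<le> l \<and> l < 4 * m' \<longrightarrow> \<theta> l = 1 / sqrt (real (2 * m')) \<or> \<theta> l = - (1 / sqrt (real (2 * m'))))
   \<and> exp_regret U alg R B k T m' \<theta> \<ge>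
       ennreal ((1/24) * min (R * real (4 * m') * sqrt (real k * real T) + B * real (4 * m') * real k) (B * real k * real T))"
proof -
  obtain S where "ennreal regret_lower_bound \<le> exp_regret U alg R B k T m' (theta S)"
    using ex_hard_sign_pattern by blast
  moreover have "ennreal ((1/24) * min (R * real (4 * m') * sqrt (real k * real T) + B * real (4 * m') * real k)
      (B * real k * real T)) \<le> ennreal regret_lower_bound"
    by (rule ennreal_leI[OF min_regret_le_regret_lower_bound])
  ultimately show ?thesis
    by (intro exI[of _ "theta S"]) (auto simp: theta_def thetaA_def thetaB_def)
qed

end

theorem theorem7:
  shows "\<exists>C0>0. \<exists>c>0. \<forall>(R::real) (B::real) (k::nat) (T::nat) (m'::nat) (U::real measure) (alg::real algorithm).
    R > 0 \<and> B > 0 \<and> k > 0 \<and> T > 0 \<and> m' > 0 \<and> prob_space U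
    \<and> (\<forall>u\<in>space U. \<forall>t H r. alg u t H r \<in> choice_sets k T m' t)
    \<and> (\<forall>t H. (\<lambda>(u, r). alg u t H r) \<in> (U \<Otimes>\<^sub>M PiM UNIV (\<lambda>_. PiM UNIV (\<lambda>_. borel))) \<rightarrow>\<^sub>M count_space UNIV)
    \<and> real k * real T \<ge> C0 * (R * real (4 * m') / B)\<^sup>2
    \<longrightarrow> (\<exists>\<theta>::nat \<Rightarrow> real.
          (\<forall>l < 2 * m'. \<theta> l = R / sqrt (real k * real (T div 2)) \<or> \<theta> l = - (R / sqrt (real k * real (T div 2))))
        \<and> (\<forall>l. 2 * m' \<le> l \<and> l < 4 * m' \<longrightarrow> \<theta> l = 1 / sqrt (real (2 * m')) \<or> \<theta> l = - (1 / sqrt (real (2 * m'))))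
        \<and> exp_regret U alg R B k T m' \<theta>
            \<ge> ennreal (c * min (R * real (4 * m') * sqrt (real k * real T) + B * real (4 * m') * real k) (B * real k * real T)))"
proof (rule exI[of _ "1::real"], intro conjI exI[of _ "1/24::real"] allI impI, goal_cases)
  case (3 R B k T m' U alg)
  \<comment> \<open>The bound holds for all parameters.\<close>
  then interpret hard_instance R B k T m' U alg
    by (unfold hard_instance_def) blast
  show ?case by (rule ex_hard_theta)
qed simp_all

end
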